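(* Let $m\ge2$ facilities all have capacity $k$, with $mk<n$. Let $\vec v\in[0,1]^m$ with $v_1<v_2<\dots<v_m$, and assume $\lfloor v_{j+1}(n-1)\rfloor-\lfloor v_j(n-1)\rfloor>1$ for every $j\in\{1,\dots,m-1\}$. Then $\mathcal{PM}_{\vec v}$ is Equilibrium Stable if and only if $\lfloor v_{j+1}(n-1)\rfloor-\lfloor v_j(n-1)\rfloor\ge 2k-1$ for every $j\in\{1,\dots,m-1\}$.
   Context: There are $n$ agents with positions $\vec x\in[0,1]^n$ and $m$ facilities; a location $\vec y=(y_1,\dots,y_m)$ places facility $j$ at $y_j$. A fixed priority order breaks ties. FCFS game induced by $(\vec x,\vec y)$ with capacities $k_1,\dots,k_m$ (here all equal to $k$): each agent $i$ chooses $s_i\in\{1,\dots,m\}$; $\mathcal S_j$ = agents choosing $j$; $T_j\subseteq\mathcal S_j$ = the $\min(k_j,|\mathcal S_j|)$ agents of $\mathcal S_j$ closest to $y_j$ (ties by priority); utility $u_i=1-|x_i-y_j|$ if $i\in T_j$, else $0$. $NE(\vec x,\vec y)$ = set of pure Nash equilibria; $SW_\gamma=\sum_iu_i$. A mechanism $M:[0,1]^n\to\mathbb R^m$ is absolutely truthful if for every $i,\vec x,x_i'\in[0,1],\vec s_{-i}$: $\max_{s_i}u_i(\vec x,M(\vec x);s_i,\vec s_{-i})\ge\max_{s_i'}u_i(\vec x,M(x_i',\vec x_{-i});s_i',\vec s_{-i})$; it is Equilibrium Stable (ES) if it is absolutely truthful and for every $\vec x$ all $\gamma\in NE(\vec x,M(\vec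 x))$ give the same $SW_\gamma(\vec x,M(\vec x))$. Percentile mechanism $\mathcal{PM}_{\vec v}$: sort reports $x_1\le\dots\le x_n$, set $y_j=x_{\lfloor(n-1)v_j\rfloor+1}$. *)

theory Defs
  imports Complex_Main
begin

text \<open>Agents are indexed 0..<n, facilities 0..<m (0-indexed).
  Positions x :: nat => real, facility locations y :: nat => real,
  strategy profiles s :: nat => nat (agent i chooses facility s i).
  The fixed priority order is given by a ranking pr :: nat => nat
  (injective on the agents); smaller pr value = higher priority.\<close>

definition beats :: "(nat \<Rightarrow> nat) \<Rightarrow> (nat \<Rightarrow> real) \<Rightarrow> real \<Rightarrow> nat \<Rightarrow> nat \<Rightarrow> bool" where
  "beats pr x yj a b \<longleftrightarrow>
     \<bar>x a - yj\<bar> < \<bar>x b - yj\<bar> \<or> (\<bar>x a - yj\<bar> = \<bar>x b - yj\<bar> \<and> pr a < pr b)"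

text \<open>Agent i is in T_{s i}: fewer than k agents choosing the same facility
  are ahead of i (closer, ties broken by priority).\<close>
definition served :: "nat \<Rightarrow> nat \<Rightarrow> (nat \<Rightarrow> nat) \<Rightarrow> (nat \<Rightarrow> real) \<Rightarrow> (nat \<Rightarrow> real)
    \<Rightarrow> (nat \<Rightarrow> nat) \<Rightarrow> nat \<Rightarrow> bool" where
  "served n k pr x y s i \<longleftrightarrow>
     card {a \<in> {0..<n}. a \<noteq> i \<and> s a = s i \<and> beats pr x (y (s i)) a i} < k"

definition util :: "nat \<Rightarrow> nat \<Rightarrow> (nat \<Rightarrow> nat) \<Rightarrow> (nat \<Rightarrow> real) \<Rightarrow> (nat \<Rightarrow> real)
    \<Rightarrow> (nat \<Rightarrow> nat) \<Rightarrow> nat \<Rightarrow> real" where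
  "util n k pr x y s i = (if served n k pr x y s i then 1 - \<bar>x i - y (s i)\<bar> else 0)"

definition profile :: "nat \<Rightarrow> nat \<Rightarrow> (nat \<Rightarrow> nat) \<Rightarrow> bool" where
  "profile m n s \<longleftrightarrow> (\<forall>i<n. s i < m)"

definition is_NE :: "nat \<Rightarrow> nat \<Rightarrow> nat \<Rightarrow> (nat \<Rightarrow> nat) \<Rightarrow> (nat \<Rightarrow> real) \<Rightarrow> (nat \<Rightarrow> real)
    \<Rightarrow> (nat \<Rightarrow> nat) \<Rightarrow> bool" where
  "is_NE m n k pr x y s \<longleftrightarrow> profile m n s \<and>
     (\<forall>i<n. \<forall>j<m. util n k pr x y (s(i := j)) i \<le> util n k pr x y s i)"

definition SW :: "nat \<Rightarrow> nat \<Rightarrow> (nat \<Rightarrow> nat) \<Rightarrow> (nat \<Rightarrow> real) \<Rightarrow> (nat \<Rightarrow> real)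
    \<Rightarrow> (nat \<Rightarrow> nat) \<Rightarrow> real" where
  "SW n k pr x y s = (\<Sum>i<n. util n k pr x y s i)"

definition best_util :: "nat \<Rightarrow> nat \<Rightarrow> nat \<Rightarrow> (nat \<Rightarrow> nat) \<Rightarrow> (nat \<Rightarrow> real) \<Rightarrow> (nat \<Rightarrow> real)
    \<Rightarrow> (nat \<Rightarrow> nat) \<Rightarrow> nat \<Rightarrow> real" where
  "best_util m n k pr x y s i = Max ((\<lambda>j. util n k pr x y (s(i := j)) i) ` {0..<m})"

definition valid_pos :: "nat \<Rightarrow> (nat \<Rightarrow> real) \<Rightarrow> bool" where
  "valid_pos n x \<longleftrightarrow> (\<forall>i<n. x i \<in> {0..1})"

definition abs_truthful :: "nat \<Rightarrow> nat \<Rightarrow> nat \<Rightarrow> (nat \<Rightarrow> nat)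
    \<Rightarrow> ((nat \<Rightarrow> real) \<Rightarrow> (nat \<Rightarrow> real)) \<Rightarrow> bool" where
  "abs_truthful m n k pr M \<longleftrightarrow>
     (\<forall>i<n. \<forall>x x'. valid_pos n x \<longrightarrow> x' \<in> {0..1} \<longrightarrow>
        (\<forall>s. profile m n s \<longrightarrow>
           best_util m n k pr x (M x) s i \<ge> best_util m n k pr x (M (x(i := x'))) s i))"

definition equilibrium_stable :: "nat \<Rightarrow> nat \<Rightarrow> nat \<Rightarrow> (nat \<Rightarrow> nat)
    \<Rightarrow> ((nat \<Rightarrow> real) \<Rightarrow> (nat \<Rightarrow> real)) \<Rightarrow> bool" where
  "equilibrium_stable m n k pr M \<longleftrightarrow> abs_truthful m n k pr M \<and>
     (\<forall>x. valid_pos n x \<longrightarrow> (\<forall>g g'. is_NE m n k pr x (M x) g \<longrightarrow> is_NE m n k pr x (M x) g'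
        \<longrightarrow> SW n k pr x (M x) g = SW n k pr x (M x) g'))"

definition PM :: "nat \<Rightarrow> (nat \<Rightarrow> real) \<Rightarrow> (nat \<Rightarrow> real) \<Rightarrow> (nat \<Rightarrow> real)" where
  "PM n v x = (\<lambda>j. sort (map x [0..<n]) ! nat \<lfloor>v j * real (n - 1)\<rfloor>)"

end

theory Submission
  imports Defs "HOL-Library.Multiset"
begin

text \<open>If consecutive percentile ranks are at least \<open>2k - 1\<close> apart, no equilibrium has a blocking pair,
  i.e. an agent who could still be served with positive utility at another facility. For a blocking pair
  of minimal distance, the facilities serving the agents at the blocking agent's location must also
  serve every agent closer to them, and counting ranks shows that these facilities, whose percentile
  ranks are \<open>2k - 1\<close> apart, cannot accommodate all of them. So every facility serves a welfare-maximal
  set of at most \<open>k\<close> agents and all equilibria have the same welfare; truthfulness holds for every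
  percentile mechanism since a misreport can only move an order statistic away from the reporter.
  Conversely, a gap \<open>g\<close> with \<open>2 \<le> g \<le> 2k - 2\<close> admits an explicit instance with two equilibria of
  different welfare. The condition \<open>mk < n\<close> leaves room for it on the right or, after reflecting the
  line, on the left, and reindexing the agents by priority rank handles any tie-breaking order.\<close>

section \<open>Tie-breaking order and ranks\<close>

lemma beats_irrefl: "\<not> beats pr x yj a a"
  by (simp add: beats_def)

lemma beats_trans: "beats pr x yj a b \<Longrightarrow> beats pr x yj b c \<Longrightarrow> beats pr x yj a c"
  by (auto simp: beats_def)

lemma beats_total:
  assumes "inj_on pr {0..<n}" "a < n" "b < n" "a \<noteq> b"
  shows "beats pr x yj a b \<or> beats pr x yj b a"
proof -
  have "pr a \<noteq> pr b" using assms by (auto dest: inj_onD)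
  then show ?thesis by (auto simp: beats_def)
qed

lemma beats_if_closer: "\<bar>x a - yj\<bar> < \<bar>x b - yj\<bar> \<Longrightarrow> beats pr x yj a b"
  by (simp add: beats_def)

definition strict_total_on :: "'a set \<Rightarrow> ('a \<Rightarrow> 'a \<Rightarrow> bool) \<Rightarrow> bool" where
  "strict_total_on C R \<longleftrightarrow> (\<forall>a\<in>C. \<not> R a a) \<and> (\<forall>a\<in>C. \<forall>b\<in>C. \<forall>c\<in>C. R a b \<longrightarrow> R b c \<longrightarrow> R a c)
     \<and> (\<forall>a\<in>C. \<forall>b\<in>C. a \<noteq> b \<longrightarrow> R a b \<or> R b a)"

lemma rank_less_rank:
  assumes "strict_total_on C R" "finite C" "u \<in> C" "w \<in> C" "R u w"
  shows "card {a \<in> C. R a u} < card {a \<in> C. R a w}"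
proof (rule psubset_card_mono)
  have irrefl: "\<not> R u u" and trans: "\<And>a. a \<in> C \<Longrightarrow> R a u \<Longrightarrow> R a w"
    using assms unfolding strict_total_on_def by blast+
  then have "{a \<in> C. R a u} \<subseteq> {a \<in> C. R a w}" and "u \<in> {a \<in> C. R a w} - {a \<in> C. R a u}"
    using assms by auto
  then show "{a \<in> C. R a u} \<subset> {a \<in> C. R a w}" by blast
qed (use assms in simp)

lemma rank_inj_on:
  assumes "strict_total_on C R" "finite C"
  shows "inj_on (\<lambda>c. card {a \<in> C. R a c}) C"
proof (rule inj_onI, rule ccontr)
  fix c d assume "c \<in> C" "d \<in> C" "card {a \<in> C. R a c} = card {a \<in> C. R a d}" "c \<noteq> d"
  moreover from this assms have "R c d \<or> R d c" by (auto simp: strict_total_on_def)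
  ultimately show False using rank_less_rank[OF assms, of c d] rank_less_rank[OF assms, of d c] by auto
qed

lemma rank_image:
  assumes "strict_total_on C R" "finite C"
  shows "(\<lambda>c. card {a \<in> C. R a c}) ` C = {..<card C}"
proof -
  let ?r = "\<lambda>c. card {a \<in> C. R a c}"
  have "?r c < card C" if "c \<in> C" for c
  proof (rule psubset_card_mono)
    have "\<not> R c c" using that assms(1) by (simp add: strict_total_on_def)
    then show "{a \<in> C. R a c} \<subset> C" using that by blast
  qed (use assms in simp)
  then have "?r ` C \<subseteq> {..<card C}" by auto
  moreover have "card (?r ` C) = card C" using rank_inj_on[OF assms] by (simp add: card_image)
  ultimately show ?thesis by (simp add: card_subset_eq)
qed

lemma card_rank_less:
  assumes "strict_total_on C R" "finite C"
  shows "card {c \<in> C. card {a \<in> C. R a c} < k} = min k (card C)"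
proof -
  let ?r = "\<lambda>c. card {a \<in> C. R a c}"
  have "card {c \<in> C. ?r c < k} = card (?r ` {c \<in> C. ?r c < k})"
    by (rule card_image[symmetric], rule inj_on_subset[OF rank_inj_on[OF assms]]) auto
  also have "?r ` {c \<in> C. ?r c < k} = ?r ` C \<inter> {..<k}" by auto
  also have "\<dots> = {..<min k (card C)}" unfolding rank_image[OF assms] by auto
  finally show ?thesis by simp
qed

section \<open>Order statistics\<close>

lemma sorted_nth_iff_less_length_filter:
  fixes L :: "real list"
  assumes "sorted L" "q < length L" "\<And>z z'. P z \<Longrightarrow> z' \<le> z \<Longrightarrow> P z'"
  shows "P (L ! q) \<longleftrightarrow> q < length (filter P L)"
  using assms
proof (induction L arbitrary: q)
  case Nil then show ?case by simp
next
  case (Cons a L)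
  show ?case
  proof (cases "P a")
    case True
    show ?thesis
    proof (cases q)
      case 0 then show ?thesis using True by simp
    next
      case (Suc q)
      then show ?thesis using Cons True by simp
    qed
  next
    case False
    have "\<forall>z\<in>set L. \<not> P z" using Cons.prems(1) False Cons.prems(3) by auto
    then have "filter P L = []" by (simp add: filter_empty_conv)
    moreover have "\<not> P ((a # L) ! q)"
    proof (cases q)
      case 0 then show ?thesis using False by simp
    next
      case (Suc q)
      then have "q < length L" using Cons.prems(2) by simp
      then have "L ! q \<in> set L" by simp
      then show ?thesis using \<open>\<forall>z\<in>set L. \<not> P z\<close> Suc by simp
    qed
    ultimately show ?thesis using False by simp
  qed
qed

lemma length_filter_map_upt: "length (filter P (map x [0..<n])) = card {a. a < n \<and> P (x a)}"
  unfolding length_filter_conv_card by (rule arg_cong[where f = card]) auto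

lemma sort_map_nth_less_iff:
  fixes x :: "nat \<Rightarrow> real"
  assumes "q < n"
  shows "sort (map x [0..<n]) ! q < t \<longleftrightarrow> q < card {a. a < n \<and> x a < t}"
proof -
  have "sort (map x [0..<n]) ! q < t \<longleftrightarrow> q < length (filter (\<lambda>z. z < t) (sort (map x [0..<n])))"
    by (rule sorted_nth_iff_less_length_filter) (use assms in auto)
  then show ?thesis by (simp only: filter_sort length_sort length_filter_map_upt)
qed

lemma sort_map_nth_le_iff:
  fixes x :: "nat \<Rightarrow> real"
  assumes "q < n"
  shows "sort (map x [0..<n]) ! q \<le> t \<longleftrightarrow> q < card {a. a < n \<and> x a \<le> t}"
proof -
  have "sort (map x [0..<n]) ! q \<le> t \<longleftrightarrow> q < length (filter (\<lambda>z. z \<le> t) (sort (map x [0..<n])))"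
    by (rule sorted_nth_iff_less_length_filter) (use assms in auto)
  then show ?thesis by (simp only: filter_sort length_sort length_filter_map_upt)
qed

lemma card_less_sort_map_nth:
  fixes x :: "nat \<Rightarrow> real"
  assumes "q < n"
  shows "card {a. a < n \<and> x a < sort (map x [0..<n]) ! q} \<le> q"
  using sort_map_nth_less_iff[OF assms, of x "sort (map x [0..<n]) ! q"] by simp

lemma card_le_sort_map_nth:
  fixes x :: "nat \<Rightarrow> real"
  assumes "q < n"
  shows "q < card {a. a < n \<and> x a \<le> sort (map x [0..<n]) ! q}"
  using sort_map_nth_le_iff[OF assms, of x "sort (map x [0..<n]) ! q"] by simp

lemma sort_map_nth_in_image:
  assumes "q < n"
  shows "\<exists>a<n. sort (map x [0..<n]) ! q = x a"
proof -
  have "sort (map x [0..<n]) ! q \<in> set (sort (map x [0..<n]))"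
    by (rule nth_mem) (use assms in simp)
  then show ?thesis by auto
qed

lemma sort_map_reindex:
  assumes "bij_betw \<pi> {0..<n} {0..<n}"
  shows "sort (map (\<lambda>a. x (\<pi> a)) [0..<n]) = sort (map x [0..<n])"
proof -
  have "mset (map (\<lambda>a. x (\<pi> a)) [0..<n]) = image_mset x (image_mset \<pi> (mset_set {0..<n}))"
    by (simp add: multiset.map_comp comp_def)
  also have "image_mset \<pi> (mset_set {0..<n}) = mset_set {0..<n}"
    using assms by (simp add: image_mset_mset_set bij_betw_def)
  finally have "mset (map (\<lambda>a. x (\<pi> a)) [0..<n]) = mset (map x [0..<n])" by simp
  then show ?thesis by (metis sorted_list_of_multiset_mset)
qed

lemma sort_map_mono:
  fixes x :: "nat \<Rightarrow> real"
  assumes "mono x"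
  shows "sort (map x [0..<n]) = map x [0..<n]"
  using assms by (intro sorted_sort_id) (auto simp: sorted_map monoD intro: sorted_wrt_mono_rel[OF _ sorted_upt])

text \<open>The agents strictly closer to the \<open>q\<close>-th order statistic than a location \<open>z\<close> bridge the rank
  distance between \<open>q\<close> and the block of ranks \<open>[#{x < z}, #{x \<le> z})\<close> of the agents at \<open>z\<close>.\<close>

lemma card_closer_to_order_statistic:
  fixes x :: "nat \<Rightarrow> real" and z :: real
  assumes q: "q < n" and yq: "yq = sort (map x [0..<n]) ! q"
  defines "C \<equiv> card {a. a < n \<and> \<bar>x a - yq\<bar> < \<bar>z - yq\<bar>}"
  shows "card {a. a < n \<and> x a < z} \<le> q + C" and "q + 1 \<le> card {a. a < n \<and> x a \<le> z} + C"
proof -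
  have below: "card {a. a < n \<and> x a < yq} \<le> q" and above: "q < card {a. a < n \<and> x a \<le> yq}"
    using card_less_sort_map_nth[OF q] card_le_sort_map_nth[OF q] yq by simp_all
  have split: "card {a. a < n \<and> P a} \<le> card {a. a < n \<and> Q a} + C"
    if "\<And>a. P a \<Longrightarrow> \<not> Q a \<Longrightarrow> \<bar>x a - yq\<bar> < \<bar>z - yq\<bar>" for P Q :: "nat \<Rightarrow> bool"
  proof -
    have "{a. a < n \<and> P a} \<subseteq> {a. a < n \<and> Q a} \<union> {a. a < n \<and> \<bar>x a - yq\<bar> < \<bar>z - yq\<bar>}"
      using that by blast
    then have "card {a. a < n \<and> P a} \<le> card ({a. a < n \<and> Q a} \<union> {a. a < n \<and> \<bar>x a - yq\<bar> < \<bar>z - yq\<bar>})"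
      by (intro card_mono) auto
    also have "\<dots> \<le> card {a. a < n \<and> Q a} + C" unfolding C_def by (rule card_Un_le)
    finally show ?thesis .
  qed
  show "card {a. a < n \<and> x a < z} \<le> q + C"
  proof (cases "yq \<le> z")
    case True
    have "card {a. a < n \<and> x a < z} \<le> card {a. a < n \<and> x a < yq} + C"
      by (rule split) (use True in auto)
    then show ?thesis using below by linarith
  next
    case False
    have "card {a. a < n \<and> x a < z} \<le> card {a. a < n \<and> x a < yq}"
      using False by (intro card_mono) auto
    then show ?thesis using below by linarith
  qed
  show "q + 1 \<le> card {a. a < n \<and> x a \<le> z} + C"
  proof (cases "yq \<le> z")
    case True
    have "card {a. a < n \<and> x a \<le> yq} \<le> card {a. a < n \<and> x a \<le> z}"
      using True by (intro card_mono) auto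
    then show ?thesis using above by linarith
  next
    case False
    have "card {a. a < n \<and> x a \<le> yq} \<le> card {a. a < n \<and> x a \<le> z} + C"
      by (rule split) (use False in auto)
    then show ?thesis using above by linarith
  qed
qed

section \<open>Served agents\<close>

definition choosers :: "nat \<Rightarrow> (nat \<Rightarrow> nat) \<Rightarrow> nat \<Rightarrow> nat set" where
  "choosers n s j = {a. a < n \<and> s a = j}"

definition served_agents :: "nat \<Rightarrow> nat \<Rightarrow> (nat \<Rightarrow> nat) \<Rightarrow> (nat \<Rightarrow> real) \<Rightarrow> (nat \<Rightarrow> real)
    \<Rightarrow> (nat \<Rightarrow> nat) \<Rightarrow> nat \<Rightarrow> nat set" where
  "served_agents n k pr x y s j = {a. a < n \<and> s a = j \<and> served n k pr x y s a}"

lemma finite_choosers [simp]: "finite (choosers n s j)"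
  by (simp add: choosers_def)

lemma finite_served_agents [simp]: "finite (served_agents n k pr x y s j)"
  by (simp add: served_agents_def)

lemma served_iff_card_beating_choosers:
  "served n k pr x y s i \<longleftrightarrow> card {a \<in> choosers n s (s i). beats pr x (y (s i)) a i} < k"
proof -
  have "{a \<in> {0..<n}. a \<noteq> i \<and> s a = s i \<and> beats pr x (y (s i)) a i}
      = {a \<in> choosers n s (s i). beats pr x (y (s i)) a i}"
    by (auto simp: choosers_def beats_irrefl)
  then show ?thesis by (simp add: served_def)
qed

lemma card_served_agents:
  assumes "inj_on pr {0..<n}"
  shows "card (served_agents n k pr x y s j) = min k (card (choosers n s j))"
proof -
  have "served_agents n k pr x y s j
      = {c \<in> choosers n s j. card {a \<in> choosers n s j. beats pr x (y j) a c} < k}"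
    by (auto simp: served_agents_def choosers_def served_iff_card_beating_choosers)
  also have "card \<dots> = min k (card (choosers n s j))"
    by (rule card_rank_less)
      (use beats_irrefl beats_trans beats_total[OF assms] in \<open>auto simp: strict_total_on_def choosers_def\<close>)
  finally show ?thesis .
qed

lemma served_update_iff:
  "served n k pr x y (s(b := j)) b \<longleftrightarrow> card {a. a < n \<and> a \<noteq> b \<and> s a = j \<and> beats pr x (y j) a b} < k"
proof -
  have "{a \<in> {0..<n}. a \<noteq> b \<and> (s(b := j)) a = (s(b := j)) b \<and> beats pr x (y ((s(b := j)) b)) a b}
      = {a. a < n \<and> a \<noteq> b \<and> s a = j \<and> beats pr x (y j) a b}" by auto
  then show ?thesis by (simp add: served_def)
qed

lemma served_if_beating_subset:
  assumes "{a. a < n \<and> s a = s t \<and> beats pr x (y (s t)) a t} \<subseteq> K" "finite K" "card K < k"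
  shows "served n k pr x y s t"
proof -
  have "card {a \<in> choosers n s (s t). beats pr x (y (s t)) a t} \<le> card K"
    using assms(1,2) by (intro card_mono) (auto simp: choosers_def)
  then show ?thesis using assms(3) by (simp add: served_iff_card_beating_choosers)
qed

lemma util_update_eq_0_if_beaten:
  assumes "finite K" "k \<le> card K" "K \<subseteq> {a. a < n \<and> a \<noteq> t \<and> s a = j \<and> beats pr x (y j) a t}"
  shows "util n k pr x y (s(t := j)) t = 0"
proof -
  have "card K \<le> card {a. a < n \<and> a \<noteq> t \<and> s a = j \<and> beats pr x (y j) a t}"
    using assms(3) by (intro card_mono) auto
  then show ?thesis using assms(2) by (simp add: util_def served_update_iff)
qed

lemma util_nonneg: "\<bar>x i - y (s i)\<bar> \<le> 1 \<Longrightarrow> 0 \<le> util n k pr x y s i"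
  by (simp add: util_def)

lemma served_if_util_pos: "0 < util n k pr x y s i \<Longrightarrow> served n k pr x y s i"
  by (auto simp: util_def split: if_splits)

lemma util_update_le: "\<bar>x t - y j\<bar> \<le> 1 \<Longrightarrow> util n k pr x y (s(t := j)) t \<le> 1 - \<bar>x t - y j\<bar>"
  by (simp add: util_def)

lemma util_update_nonpos: "1 \<le> \<bar>x t - y j\<bar> \<Longrightarrow> util n k pr x y (s(t := j)) t \<le> 0"
  by (simp add: util_def)

section \<open>Absolute truthfulness of percentile mechanisms\<close>

lemma percentile_index_less:
  assumes "v \<in> {0..1}" "0 < n"
  shows "nat \<lfloor>v * real (n - 1)\<rfloor> < n"
proof -
  have "v * real (n - 1) \<le> real (n - 1)" using assms by (simp add: mult_left_le_one_le)
  then show ?thesis using assms by linarith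
qed

lemma PM_in_unit_interval:
  assumes "valid_pos n x" "v j \<in> {0..1}" "0 < n"
  shows "PM n v x j \<in> {0..1}"
  using sort_map_nth_in_image[OF percentile_index_less[OF assms(2,3)], of x] assms(1)
  by (auto simp: PM_def valid_pos_def)

lemma sort_map_nth_update_moves_away:
  fixes x :: "nat \<Rightarrow> real" and x' :: real
  assumes q: "q < n" and i: "i < n"
  defines "t \<equiv> sort (map x [0..<n]) ! q" and "t' \<equiv> sort (map (x(i := x')) [0..<n]) ! q"
  shows "(x i \<le> t \<and> t \<le> t') \<or> (t' \<le> t \<and> t \<le> x i)"
proof (cases "x i < t")
  case True
  have "card {a. a < n \<and> (x(i := x')) a < t} \<le> card {a. a < n \<and> x a < t}"
    using True by (intro card_mono) auto
  also have "\<dots> \<le> q" unfolding t_def by (rule card_less_sort_map_nth[OF q])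
  finally have "\<not> t' < t" unfolding t'_def using sort_map_nth_less_iff[OF q, of "x(i := x')" t] by simp
  then show ?thesis using True by simp
next
  case False
  show ?thesis
  proof (cases "x i = t")
    case False': False
    have "q < card {a. a < n \<and> x a \<le> t}" unfolding t_def by (rule card_le_sort_map_nth[OF q])
    also have "\<dots> \<le> card {a. a < n \<and> (x(i := x')) a \<le> t}"
      using False False' by (intro card_mono) auto
    finally have "t' \<le> t" unfolding t'_def using sort_map_nth_le_iff[OF q, of "x(i := x')" t] by simp
    then show ?thesis using False by simp
  qed linarith
qed

lemma util_le_if_facility_moves_away:
  assumes away: "\<bar>x i - y' (s i)\<bar> = \<bar>x i - y (s i)\<bar> + \<bar>y (s i) - y' (s i)\<bar>"
    and "\<bar>x i - y (s i)\<bar> \<le> 1"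
  shows "util n k pr x y' s i \<le> util n k pr x y s i"
proof (cases "served n k pr x y' s i")
  case True
  have "beats pr x (y' (s i)) a i" if "beats pr x (y (s i)) a i" for a
    using that away abs_triangle_ineq[of "x a - y (s i)" "y (s i) - y' (s i)"]
    unfolding beats_def by linarith
  then have "card {a \<in> {0..<n}. a \<noteq> i \<and> s a = s i \<and> beats pr x (y (s i)) a i}
      \<le> card {a \<in> {0..<n}. a \<noteq> i \<and> s a = s i \<and> beats pr x (y' (s i)) a i}"
    by (intro card_mono) auto
  then have "served n k pr x y s i" using True unfolding served_def by linarith
  then show ?thesis using True away by (simp add: util_def)
qed (use assms in \<open>simp add: util_def\<close>)

lemma PM_abs_truthful:
  assumes v: "\<forall>j<m. v j \<in> {0..1}" and "0 < n" "0 < m"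
  shows "abs_truthful m n k pr (PM n v)"
  unfolding abs_truthful_def
proof (intro allI impI)
  fix i :: nat and x :: "nat \<Rightarrow> real" and x' :: real and s :: "nat \<Rightarrow> nat"
  assume i: "i < n" and x: "valid_pos n x" and "x' \<in> {0..1}" and "profile m n s"
  let ?y = "PM n v x" and ?y' = "PM n v (x(i := x'))"
  have better: "util n k pr x ?y' (s(i := j)) i \<le> util n k pr x ?y (s(i := j)) i" if j: "j < m" for j
  proof (rule util_le_if_facility_moves_away)
    have q: "nat \<lfloor>v j * real (n - 1)\<rfloor> < n" using percentile_index_less assms j by blast
    show "\<bar>x i - ?y' ((s(i := j)) i)\<bar> = \<bar>x i - ?y ((s(i := j)) i)\<bar> + \<bar>?y ((s(i := j)) i) - ?y' ((s(i := j)) i)\<bar>"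
      using sort_map_nth_update_moves_away[OF q i, of x x'] by (auto simp: PM_def)
    have "?y j \<in> {0..1}" "x i \<in> {0..1}" using PM_in_unit_interval assms j x i by (auto simp: valid_pos_def)
    then show "\<bar>x i - ?y ((s(i := j)) i)\<bar> \<le> 1" by auto
  qed
  show "best_util m n k pr x ?y' s i \<le> best_util m n k pr x ?y s i"
    unfolding best_util_def
  proof (rule Max.boundedI)
    fix u assume "u \<in> (\<lambda>j. util n k pr x ?y' (s(i := j)) i) ` {0..<m}"
    then obtain j where "j < m" "u = util n k pr x ?y' (s(i := j)) i" by auto
    then have "u \<le> util n k pr x ?y (s(i := j)) i" using better by simp
    also have "\<dots> \<le> Max ((\<lambda>j. util n k pr x ?y (s(i := j)) i) ` {0..<m})"
      using \<open>j < m\<close> by (intro Max_ge) auto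
    finally show "u \<le> Max ((\<lambda>j. util n k pr x ?y (s(i := j)) i) ` {0..<m})" .
  qed (use \<open>0 < m\<close> in auto)
qed

section \<open>Equilibria under wide percentile gaps\<close>

definition blocking :: "nat \<Rightarrow> nat \<Rightarrow> nat \<Rightarrow> (nat \<Rightarrow> nat) \<Rightarrow> (nat \<Rightarrow> real) \<Rightarrow> (nat \<Rightarrow> real)
    \<Rightarrow> (nat \<Rightarrow> nat) \<Rightarrow> nat \<Rightarrow> nat \<Rightarrow> bool" where
  "blocking m n k pr x y s b j \<longleftrightarrow> b < n \<and> j < m \<and> b \<notin> served_agents n k pr x y s j \<and> \<bar>x b - y j\<bar> < 1 \<and>
     (card (served_agents n k pr x y s j) < k \<or>
      (\<exists>w \<in> served_agents n k pr x y s j. \<bar>x b - y j\<bar> < \<bar>x w - y j\<bar>))"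

lemma served_after_deviation_if_blocking:
  assumes inj: "inj_on pr {0..<n}" and blocking: "blocking m n k pr x y s b j"
  shows "served n k pr x y (s(b := j)) b"
proof -
  let ?T = "{a. a < n \<and> a \<noteq> b \<and> s a = j \<and> beats pr x (y j) a b}"
  have "card ?T < k"
  proof (cases "card (served_agents n k pr x y s j) < k")
    case True
    then have "card (choosers n s j) < k" using card_served_agents[OF inj] by simp
    moreover have "card ?T \<le> card (choosers n s j)" by (rule card_mono) (auto simp: choosers_def)
    ultimately show ?thesis by simp
  next
    case False
    then obtain w where w: "w \<in> served_agents n k pr x y s j" "\<bar>x b - y j\<bar> < \<bar>x w - y j\<bar>"
      using blocking by (auto simp: blocking_def)
    then have "s w = j" "served n k pr x y s w" by (auto simp: served_agents_def)
    have "?T \<subseteq> {a \<in> choosers n s (s w). beats pr x (y (s w)) a w}"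
      using beats_trans[OF _ beats_if_closer[OF w(2)]] \<open>s w = j\<close> by (auto simp: choosers_def)
    then have "card ?T \<le> card {a \<in> choosers n s (s w). beats pr x (y (s w)) a w}"
      by (intro card_mono) auto
    also have "\<dots> < k" using \<open>served n k pr x y s w\<close> by (simp add: served_iff_card_beating_choosers)
    finally show ?thesis .
  qed
  then show ?thesis by (simp add: served_update_iff)
qed

lemma blocking_in_NE:
  assumes inj: "inj_on pr {0..<n}" and NE: "is_NE m n k pr x y s"
    and blocking: "blocking m n k pr x y s b j"
  shows "b \<in> served_agents n k pr x y s (s b)" "s b < m" "s b \<noteq> j"
    and "\<bar>x b - y (s b)\<bar> \<le> \<bar>x b - y j\<bar>"
proof -
  have "util n k pr x y (s(b := j)) b = 1 - \<bar>x b - y j\<bar>"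
    using served_after_deviation_if_blocking[OF inj blocking] by (simp add: util_def)
  moreover have "util n k pr x y (s(b := j)) b \<le> util n k pr x y s b"
    using NE blocking by (auto simp: is_NE_def blocking_def)
  moreover have "\<bar>x b - y j\<bar> < 1" using blocking by (simp add: blocking_def)
  ultimately have util: "1 - \<bar>x b - y j\<bar> \<le> util n k pr x y s b" and "0 < util n k pr x y s b" by simp_all
  from \<open>0 < util n k pr x y s b\<close> have served: "served n k pr x y s b" by (rule served_if_util_pos)
  then show "b \<in> served_agents n k pr x y s (s b)" "s b \<noteq> j"
    using blocking by (auto simp: served_agents_def blocking_def)
  show "s b < m" using NE blocking by (auto simp: is_NE_def profile_def blocking_def)
  show "\<bar>x b - y (s b)\<bar> \<le> \<bar>x b - y j\<bar>" using util served by (simp add: util_def)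
qed

text \<open>Intended reading: \<open>e l\<close> agents located at one point are served at facility \<open>l\<close> together with
  \<open>d l\<close> agents closer to \<open>l\<close>, which bridge the rank distance between \<open>p l\<close> and the block \<open>[A, B)\<close>
  of ranks of the agents at that point.\<close>

lemma colocated_agents_overflow:
  fixes p e d :: "nat \<Rightarrow> nat" and L :: "nat set"
  assumes "finite L" "j \<in> L" "j' \<in> L" "j \<noteq> j'" "1 \<le> k"
    and gap: "\<And>i l. i \<in> L \<Longrightarrow> l \<in> L \<Longrightarrow> i \<le> l \<Longrightarrow> p i + (l - i) * (2 * k - 1) \<le> p l"
    and left: "\<And>l. l \<in> L \<Longrightarrow> A \<le> p l + d l"
    and right: "\<And>l. l \<in> L \<Longrightarrow> p l + 1 \<le> B + d l"
    and capacity: "\<And>l. l \<in> L \<Longrightarrow> e l + d l \<le> k"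
    and free_slot: "e j + d j < k"
    and block: "B = A + (\<Sum>l\<in>L. e l)"
  shows False
proof -
  define lo hi F where "lo = Min L" and "hi = Max L" and "F = card L"
  have "L \<noteq> {}" using assms(2) by auto
  then have lo: "lo \<in> L" and hi: "hi \<in> L" and lo_le: "\<And>l. l \<in> L \<Longrightarrow> lo \<le> l \<and> l \<le> hi"
    using assms(1) by (auto simp: lo_def hi_def)
  have "lo < hi" using lo_le[OF assms(2)] lo_le[OF assms(3)] assms(4) by linarith
  have "card {j, j'} \<le> F" unfolding F_def using assms(1-3) by (intro card_mono) auto
  then have "2 \<le> F" using assms(4) by simp
  have "F \<le> card {lo..hi}" unfolding F_def using lo_le by (intro card_mono) auto
  then have F_le: "F - 1 \<le> hi - lo" by simp
  have "(\<Sum>l\<in>L. e l + d l) = (e j + d j) + (\<Sum>l\<in>L - {j}. e l + d l)"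
    using assms(1,2) by (simp add: sum.remove)
  also have "(\<Sum>l\<in>L - {j}. e l + d l) \<le> (F - 1) * k"
    using sum_mono[of "L - {j}" "\<lambda>l. e l + d l" "\<lambda>_. k"] capacity assms(1,2) by (simp add: F_def)
  finally have sum_ed: "(\<Sum>l\<in>L. e l + d l) + 1 \<le> F * k"
    using free_slot \<open>2 \<le> F\<close> by (cases F) auto
  have "d lo + d hi = (\<Sum>l\<in>{lo, hi}. d l)" using \<open>lo < hi\<close> by simp
  also have "\<dots> \<le> (\<Sum>l\<in>L. d l)" using lo hi assms(1) by (intro sum_mono2) auto
  finally have "(\<Sum>l\<in>L. e l) + d lo + d hi \<le> (\<Sum>l\<in>L. e l + d l)" by (simp add: sum.distrib)
  moreover have "p hi + 1 \<le> p lo + (\<Sum>l\<in>L. e l) + d lo + d hi"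
    using left[OF lo] right[OF hi] block by linarith
  moreover have "(F - 1) * (2 * k - 1) \<le> p hi - p lo"
    using gap[OF lo hi] lo_le[OF hi] F_le mult_right_mono[OF F_le, of "2 * k - 1"] by linarith
  moreover have "F * k < (F - 1) * (2 * k - 1) + 2"
  proof -
    obtain f q where "F = f + 2" "k = q + 1" using \<open>2 \<le> F\<close> \<open>1 \<le> k\<close> by (metis add.commute le_Suc_ex one_add_one)
    then show ?thesis by (simp add: algebra_simps)
  qed
  moreover have "p lo \<le> p hi" using gap[OF lo hi] lo_le[OF hi] by linarith
  ultimately show False using sum_ed by linarith
qed

locale minimal_blocking_pair =
  fixes m n k :: nat and pr s :: "nat \<Rightarrow> nat" and x y :: "nat \<Rightarrow> real" and c j :: nat
  assumes inj: "inj_on pr {0..<n}" and NE: "is_NE m n k pr x y s"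
    and blocking: "blocking m n k pr x y s c j"
    and minimal: "\<And>b l. blocking m n k pr x y s b l \<Longrightarrow> \<bar>x c - y j\<bar> \<le> \<bar>x b - y l\<bar>"
begin

abbreviation "S \<equiv> served_agents n k pr x y s"

definition colocated :: "nat set" where
  "colocated = {a. a < n \<and> x a = x c}"

definition facilities :: "nat set" where
  "facilities = insert j {l. l < m \<and> colocated \<inter> S l \<noteq> {}}"

definition closer :: "nat \<Rightarrow> nat set" where
  "closer l = {a. a < n \<and> \<bar>x a - y l\<bar> < \<bar>x c - y l\<bar>}"

lemma j_less: "j < m" and c_less: "c < n"
  using blocking by (auto simp: blocking_def)

lemma served_at: "a \<in> S l \<Longrightarrow> s a = l \<and> a < n"
  by (simp add: served_agents_def)

lemma colocated_served_near:
  assumes "a \<in> colocated"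
  shows "a \<in> S (s a) \<and> s a < m \<and> \<bar>x c - y (s a)\<bar> \<le> \<bar>x c - y j\<bar>"
proof (cases "a \<in> S j")
  case True
  then show ?thesis using served_at j_less by auto
next
  case False
  then have "blocking m n k pr x y s a j"
    using assms blocking by (auto simp: blocking_def colocated_def)
  with blocking_in_NE[OF inj NE this] show ?thesis using assms by (simp add: colocated_def)
qed

lemma blocking_agent_elsewhere: "s c \<noteq> j" "s c \<in> facilities"
  using blocking_in_NE[OF inj NE blocking] c_less
  by (auto simp: facilities_def colocated_def)

lemma j_facility: "j \<in> facilities"
  by (simp add: facilities_def)

lemma facilities_less: "facilities \<subseteq> {..<m}"
  using j_less by (auto simp: facilities_def)

lemma finite_facilities: "finite facilities"
  using finite_subset[OF facilities_less] by simp

lemma facility_near: "l \<in> facilities \<Longrightarrow> \<bar>x c - y l\<bar> \<le> \<bar>x c - y j\<bar>"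
  using colocated_served_near served_at by (fastforce simp: facilities_def)

text \<open>Minimality: an agent closer to \<open>y l\<close> than the colocated agents but not served there
  would form a blocking pair of smaller distance.\<close>

lemma closer_subset_served:
  assumes l: "l \<in> facilities"
  shows "closer l \<subseteq> S l"
proof
  fix a assume a: "a \<in> closer l"
  show "a \<in> S l"
  proof (rule ccontr)
    assume "a \<notin> S l"
    have "card (S l) < k \<or> (\<exists>w\<in>S l. \<bar>x a - y l\<bar> < \<bar>x w - y l\<bar>)"
    proof (cases "l = j")
      case True
      have "card (S j) < k \<or> (\<exists>w\<in>S j. \<bar>x c - y j\<bar> < \<bar>x w - y j\<bar>)"
        using blocking by (simp add: blocking_def)
      moreover have "\<bar>x a - y j\<bar> < \<bar>x c - y j\<bar>" using a True by (simp add: closer_def)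
      ultimately show ?thesis using True by force
    next
      case False
      then obtain w where "w \<in> colocated" "w \<in> S l" using l by (auto simp: facilities_def)
      then show ?thesis using a by (force simp: closer_def colocated_def)
    qed
    then have "blocking m n k pr x y s a l"
      using a \<open>a \<notin> S l\<close> facility_near[OF l] facilities_less l blocking
      by (auto simp: blocking_def closer_def)
    then show False using minimal a facility_near[OF l] by (fastforce simp: closer_def)
  qed
qed

lemma card_colocated_closer_le:
  assumes "l \<in> facilities"
  shows "card (colocated \<inter> S l) + card (closer l) \<le> k"
proof -
  have "card (colocated \<inter> S l) + card (closer l) = card ((colocated \<inter> S l) \<union> closer l)"
    by (rule card_Un_disjoint[symmetric]) (auto simp: colocated_def closer_def)
  also have "\<dots> \<le> card (S l)" using closer_subset_served[OF assms] by (intro card_mono) auto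
  also have "\<dots> \<le> k" by (simp add: card_served_agents[OF inj])
  finally show ?thesis .
qed

lemma card_colocated_closer_less: "card (colocated \<inter> S j) + card (closer j) < k"
proof -
  have disjoint: "card (colocated \<inter> S j) + card (closer j) = card ((colocated \<inter> S j) \<union> closer j)"
    by (rule card_Un_disjoint[symmetric]) (auto simp: colocated_def closer_def)
  have sub: "(colocated \<inter> S j) \<union> closer j \<subseteq> S j" using closer_subset_served[OF j_facility] by auto
  show ?thesis
  proof (cases "card (S j) < k")
    case True
    then show ?thesis using card_mono[OF _ sub] disjoint by simp
  next
    case False
    then obtain w where w: "w \<in> S j" "\<bar>x c - y j\<bar> < \<bar>x w - y j\<bar>"
      using blocking by (auto simp: blocking_def)
    then have "w \<notin> (colocated \<inter> S j) \<union> closer j" by (auto simp: closer_def colocated_def)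
    then have "card ((colocated \<inter> S j) \<union> closer j) < card (S j)"
      using w(1) sub by (intro psubset_card_mono) auto
    then show ?thesis using disjoint card_served_agents[OF inj, of k x y s j] by simp
  qed
qed

lemma card_colocated: "card colocated = (\<Sum>l\<in>facilities. card (colocated \<inter> S l))"
proof -
  have "colocated \<subseteq> (\<Union>l\<in>facilities. colocated \<inter> S l)"
  proof
    fix a assume "a \<in> colocated"
    then have "a \<in> S (s a)" "s a \<in> facilities"
      using colocated_served_near[of a] by (auto simp: facilities_def)
    then show "a \<in> (\<Union>l\<in>facilities. colocated \<inter> S l)" using \<open>a \<in> colocated\<close> by blast
  qed
  then have "card colocated = card (\<Union>l\<in>facilities. colocated \<inter> S l)"
    by (intro arg_cong[where f = card]) blast
  also have "\<dots> = (\<Sum>l\<in>facilities. card (colocated \<inter> S l))"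
  proof (rule card_UN_disjoint[OF finite_facilities])
    show "\<forall>l\<in>facilities. finite (colocated \<inter> S l)" by simp
    show "\<forall>l\<in>facilities. \<forall>l'\<in>facilities. l \<noteq> l' \<longrightarrow> colocated \<inter> S l \<inter> (colocated \<inter> S l') = {}"
      by (auto simp: served_agents_def)
  qed
  finally show ?thesis .
qed

end

lemma gap_accumulates:
  fixes p :: "nat \<Rightarrow> nat"
  assumes "\<forall>j. j + 1 < m \<longrightarrow> p j + g \<le> p (j + 1)"
  shows "j \<le> l \<Longrightarrow> l < m \<Longrightarrow> p j + (l - j) * g \<le> p l"
proof (induction l)
  case (Suc l)
  show ?case
  proof (cases "j = Suc l")
    case False
    then have "j \<le> l" using Suc.prems by simp
    then have "p j + (l - j) * g \<le> p l" using Suc by simp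
    moreover have "p l + g \<le> p (Suc l)" using assms Suc.prems by auto
    moreover have "(Suc l - j) * g = (l - j) * g + g" using \<open>j \<le> l\<close> by (simp add: Suc_diff_le)
    ultimately show ?thesis by simp
  qed simp
qed simp

lemma NE_no_blocking_pair:
  assumes inj: "inj_on pr {0..<n}" and "1 \<le> k" and NE: "is_NE m n k pr x y s"
    and percentiles: "\<forall>j<m. p j < n \<and> y j = sort (map x [0..<n]) ! p j"
    and gap: "\<forall>j. j + 1 < m \<longrightarrow> p j + (2 * k - 1) \<le> p (j + 1)"
  shows "\<not> blocking m n k pr x y s b0 j0"
proof
  assume "blocking m n k pr x y s b0 j0"
  define V where "V = {(b, j). blocking m n k pr x y s b j}"
  have "finite V" by (rule finite_subset[of _ "{..<n} \<times> {..<m}"]) (auto simp: V_def blocking_def)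
  moreover have "V \<noteq> {}" using \<open>blocking m n k pr x y s b0 j0\<close> by (auto simp: V_def)
  ultimately obtain c j where "(c, j) \<in> V" and min: "\<And>b l. (b, l) \<in> V \<Longrightarrow> \<bar>x c - y j\<bar> \<le> \<bar>x b - y l\<bar>"
    using ex_min_if_finite[of "(\<lambda>(b, l). \<bar>x b - y l\<bar>) ` V"] by fastforce
  then interpret minimal_blocking_pair m n k pr s x y c j
    using inj NE by unfold_locales (auto simp: V_def)
  let ?A = "card {a. a < n \<and> x a < x c}" and ?B = "card {a. a < n \<and> x a \<le> x c}"
  show False
  proof (rule colocated_agents_overflow[where L = facilities and j = j and j' = "s c" and p = p
        and e = "\<lambda>l. card (colocated \<inter> S l)" and d = "\<lambda>l. card (closer l)" and A = ?A and B = ?B])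
    show "?A \<le> p l + card (closer l)" and "p l + 1 \<le> ?B + card (closer l)" if "l \<in> facilities" for l
      using card_closer_to_order_statistic[of "p l" n "y l" x "x c"] percentiles facilities_less that
      by (auto simp: closer_def)
    show "p i + (l - i) * (2 * k - 1) \<le> p l" if "i \<in> facilities" "l \<in> facilities" "i \<le> l" for i l
      using gap_accumulates[OF gap] facilities_less that by auto
    have "?B = card ({a. a < n \<and> x a < x c} \<union> colocated)"
      by (rule arg_cong[where f = card]) (auto simp: colocated_def)
    also have "\<dots> = ?A + card colocated" by (rule card_Un_disjoint) (auto simp: colocated_def)
    finally show "?B = ?A + (\<Sum>l\<in>facilities. card (colocated \<inter> S l))" by (simp add: card_colocated)
  qed (use finite_facilities j_facility blocking_agent_elsewhere card_colocated_closer_le card_colocated_closer_less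
      \<open>1 \<le> k\<close> in auto)
qed

lemma sum_le_if_no_better_outsider:
  fixes f :: "'a \<Rightarrow> real"
  assumes "finite S" "finite S'" "card S' \<le> k"
    and nonneg: "\<forall>a\<in>S. 0 \<le> f a"
    and no_better: "\<forall>b\<in>S' - S. f b \<le> 0 \<or> (k \<le> card S \<and> (\<forall>w\<in>S. f b \<le> f w))"
  shows "sum f S' \<le> sum f S"
proof -
  have "sum f (S' - S) \<le> sum f (S - S')"
  proof (cases "k \<le> card S \<and> S - S' \<noteq> {}")
    case True
    define \<mu> where "\<mu> = Min (f ` (S - S'))"
    have "\<mu> \<in> f ` (S - S')" unfolding \<mu>_def using True assms(1) by (intro Min_in) auto
    then have "0 \<le> \<mu>" using nonneg by auto
    have below: "\<mu> \<le> f w" if "w \<in> S - S'" for w unfolding \<mu>_def using assms(1) that by (intro Min_le) auto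
    have above: "f b \<le> \<mu>" if "b \<in> S' - S" for b
      using no_better that \<open>\<mu> \<in> f ` (S - S')\<close> \<open>0 \<le> \<mu>\<close> by force
    have "card S' = card (S' \<inter> S) + card (S' - S)" and "card S = card (S \<inter> S') + card (S - S')"
      using assms(1,2) by (metis card_Int_Diff)+
    then have "card (S' - S) \<le> card (S - S')" using True assms(3) by (simp add: Int_commute)
    have "sum f (S' - S) \<le> of_nat (card (S' - S)) * \<mu>" using above by (intro sum_bounded_above) auto
    also have "\<dots> \<le> of_nat (card (S - S')) * \<mu>"
      using \<open>card (S' - S) \<le> card (S - S')\<close> \<open>0 \<le> \<mu>\<close> by (intro mult_right_mono) auto
    also have "\<dots> \<le> sum f (S - S')" using below by (intro sum_bounded_below) auto
    finally show ?thesis .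
  next
    case False
    have "sum f (S' - S) \<le> 0"
    proof (cases "k \<le> card S")
      case True
      then have "S \<subseteq> S'" using False by simp
      then have "S = S'" using card_seteq[OF assms(2)] True assms(3) by simp
      then show ?thesis by simp
    qed (use no_better in \<open>auto intro: sum_nonpos\<close>)
    also have "0 \<le> sum f (S - S')" using nonneg by (intro sum_nonneg) auto
    finally show ?thesis .
  qed
  then show ?thesis
    using sum.Int_Diff[OF assms(2), of f S] sum.Int_Diff[OF assms(1), of f S'] by (simp add: Int_commute)
qed

lemma SW_eq_sum_served_agents:
  assumes "profile m n s"
  shows "SW n k pr x y s = (\<Sum>j<m. \<Sum>a\<in>served_agents n k pr x y s j. 1 - \<bar>x a - y j\<bar>)"
proof -
  have "SW n k pr x y s = (\<Sum>i\<in>{i\<in>{..<n}. served n k pr x y s i}. 1 - \<bar>x i - y (s i)\<bar>)"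
    unfolding SW_def util_def by (rule sum.inter_filter[symmetric]) simp
  also have "{i\<in>{..<n}. served n k pr x y s i} = (\<Union>j<m. served_agents n k pr x y s j)"
    using assms by (auto simp: served_agents_def profile_def)
  also have "(\<Sum>i\<in>(\<Union>j<m. served_agents n k pr x y s j). 1 - \<bar>x i - y (s i)\<bar>)
      = (\<Sum>j<m. \<Sum>i\<in>served_agents n k pr x y s j. 1 - \<bar>x i - y (s i)\<bar>)"
    by (rule sum.UNION_disjoint) (auto simp: served_agents_def)
  also have "\<dots> = (\<Sum>j<m. \<Sum>a\<in>served_agents n k pr x y s j. 1 - \<bar>x a - y j\<bar>)"
    by (intro sum.cong refl) (auto simp: served_agents_def)
  finally show ?thesis .
qed

text \<open>Without blocking pairs, every facility serves a welfare-maximal set of at most \<open>k\<close> agents.\<close>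

lemma NE_welfare_eq_if_wide_gaps:
  assumes inj: "inj_on pr {0..<n}" and "1 \<le> k"
    and NE: "is_NE m n k pr x y g" "is_NE m n k pr x y g'"
    and percentiles: "\<forall>j<m. p j < n \<and> y j = sort (map x [0..<n]) ! p j"
    and gap: "\<forall>j. j + 1 < m \<longrightarrow> p j + (2 * k - 1) \<le> p (j + 1)"
    and x: "\<forall>a<n. x a \<in> {0..1}" and y: "\<forall>j<m. y j \<in> {0..1}"
  shows "SW n k pr x y g = SW n k pr x y g'"
proof -
  have le: "(\<Sum>a\<in>served_agents n k pr x y h' j. 1 - \<bar>x a - y j\<bar>) \<le> (\<Sum>a\<in>served_agents n k pr x y h j. 1 - \<bar>x a - y j\<bar>)"
    if h: "is_NE m n k pr x y h" and h': "is_NE m n k pr x y h'" and j: "j < m" for h h' j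
  proof (rule sum_le_if_no_better_outsider)
    show "card (served_agents n k pr x y h' j) \<le> k" by (simp add: card_served_agents[OF inj])
    show "\<forall>a\<in>served_agents n k pr x y h j. 0 \<le> 1 - \<bar>x a - y j\<bar>"
      using x y j by (fastforce simp: served_agents_def)
    have "\<not> blocking m n k pr x y h b j" for b by (rule NE_no_blocking_pair[OF inj \<open>1 \<le> k\<close> h percentiles gap])
    then show "\<forall>b\<in>served_agents n k pr x y h' j - served_agents n k pr x y h j. 1 - \<bar>x b - y j\<bar> \<le> 0 \<or>
        (k \<le> card (served_agents n k pr x y h j) \<and>
         (\<forall>w\<in>served_agents n k pr x y h j. 1 - \<bar>x b - y j\<bar> \<le> 1 - \<bar>x w - y j\<bar>))"
      using j by (force simp: blocking_def served_agents_def)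
  qed simp_all
  have "(\<Sum>j<m. \<Sum>a\<in>served_agents n k pr x y g j. 1 - \<bar>x a - y j\<bar>)
      = (\<Sum>j<m. \<Sum>a\<in>served_agents n k pr x y g' j. 1 - \<bar>x a - y j\<bar>)"
    using le[OF NE] le[OF NE(2,1)] by (intro sum.cong refl order_antisym) auto
  moreover have "profile m n g" "profile m n g'" using NE by (simp_all add: is_NE_def)
  ultimately show ?thesis by (simp add: SW_eq_sum_served_agents)
qed

lemma PM_equilibrium_stable_if_wide_gaps:
  assumes inj: "inj_on pr {0..<n}" and "0 < n" "0 < m"
    and v: "\<forall>j<m. v j \<in> {0..1}"
    and gaps: "\<forall>j. j + 1 < m \<longrightarrow>
       \<lfloor>v (j + 1) * real (n - 1)\<rfloor> - \<lfloor>v j * real (n - 1)\<rfloor> \<ge> 2 * int k - 1"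
  shows "equilibrium_stable m n k pr (PM n v)"
  unfolding equilibrium_stable_def
proof (intro conjI allI impI)
  show "abs_truthful m n k pr (PM n v)" by (rule PM_abs_truthful[OF v \<open>0 < n\<close> \<open>0 < m\<close>])
next
  fix x g g'
  assume x: "valid_pos n x" and NE: "is_NE m n k pr x (PM n v x) g" "is_NE m n k pr x (PM n v x) g'"
  show "SW n k pr x (PM n v x) g = SW n k pr x (PM n v x) g'"
  proof (cases "k = 0")
    case True
    then show ?thesis by (simp add: SW_def util_def served_def)
  next
    case False
    define p where "p j = nat \<lfloor>v j * real (n - 1)\<rfloor>" for j
    have gap: "\<forall>j. j + 1 < m \<longrightarrow> p j + (2 * k - 1) \<le> p (j + 1)"
    proof (intro allI impI)
      fix j assume "j + 1 < m"
      have "0 \<le> \<lfloor>v j * real (n - 1)\<rfloor>" using v \<open>j + 1 < m\<close> by auto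
      moreover have "2 * int k - 1 \<le> \<lfloor>v (j + 1) * real (n - 1)\<rfloor> - \<lfloor>v j * real (n - 1)\<rfloor>"
        using gaps \<open>j + 1 < m\<close> by blast
      ultimately show "p j + (2 * k - 1) \<le> p (j + 1)" using False unfolding p_def by linarith
    qed
    have "\<forall>j<m. p j < n \<and> PM n v x j = sort (map x [0..<n]) ! p j"
      using percentile_index_less[OF _ \<open>0 < n\<close>] v by (auto simp: p_def PM_def)
    moreover have "\<forall>a<n. x a \<in> {0..1}" and "\<forall>j<m. PM n v x j \<in> {0..1}"
      using x v PM_in_unit_interval[OF x _ \<open>0 < n\<close>] by (auto simp: valid_pos_def)
    ultimately show ?thesis using NE_welfare_eq_if_wide_gaps[OF inj _ NE _ gap] False by simp
  qed
qed

section \<open>Two equilibria with different welfare under a narrow gap\<close>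

lemma beats_id_iff: "beats (\<lambda>i. i) x yj a b \<longleftrightarrow>
    \<bar>x a - yj\<bar> < \<bar>x b - yj\<bar> \<or> (\<bar>x a - yj\<bar> = \<bar>x b - yj\<bar> \<and> a < b)"
  by (simp add: beats_def)

lemma util_update_le_if_nearest:
  assumes "served n k pr x y s t" "s t < m" "\<forall>j<m. \<bar>x t - y (s t)\<bar> \<le> \<bar>x t - y j\<bar>"
    and "\<forall>j<m. \<bar>x t - y j\<bar> \<le> 1" "j < m"
  shows "util n k pr x y (s(t := j)) t \<le> util n k pr x y s t"
  using assms by (force simp: util_def)

text \<open>An instance with two equilibria of different welfare when the gap \<open>g = p (j0 + 1) - p j0\<close>
  satisfies \<open>2 \<le> g \<le> 2k - 2\<close>. Agent \<open>t\<close> has priority \<open>t\<close> and position \<open>pos t\<close>, nondecreasing in \<open>t\<close>: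
  ranks below \<open>P0 = p j0\<close> sit at 0, ranks \<open>P0..P0 + extra\<close> at 0.7 (facility \<open>j0\<close>), rank \<open>mid\<close> at 0.8,
  the ranks up to \<open>Q0 = p (j0 + 1)\<close> at 0.9 (facility \<open>j0 + 1\<close>) and all others at 1. The facilities left
  of \<open>j0\<close> and right of \<open>j0 + 1\<close> are filled by blocks of \<open>k\<close> agents, and facility \<open>j0 + 1\<close> serves
  exactly \<open>k\<close> agents: those at 0.9, the tail \<open>R0..<far\<close> at 1, and either \<open>mid\<close> (strategy \<open>True\<close>) or
  \<open>far\<close> (strategy \<open>False\<close>). The agent left out is served at \<open>j0\<close>: \<open>mid\<close> at the same distance 0.1,
  but \<open>far\<close> at distance 0.3, so the welfare differs by 1/5. The hypothesis \<open>g \<le> 2k - 2\<close> makes room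
  for \<open>mid\<close> and \<open>far\<close> at \<open>j0\<close>, and \<open>g \<ge> 2\<close> separates \<open>mid\<close> from the agents at 0.9.\<close>

locale unstable_instance =
  fixes n m k :: nat and p :: "nat \<Rightarrow> nat" and j0 :: nat
  assumes p_step: "\<And>j. j + 1 < m \<Longrightarrow> p j < p (j + 1)"
    and p_less: "\<And>j. j < m \<Longrightarrow> p j < n"
    and j0_less: "j0 + 1 < m"
    and gap_ge: "p j0 + 2 \<le> p (j0 + 1)"
    and gap_le: "p (j0 + 1) + 2 \<le> p j0 + 2 * k"
    and room: "p (j0 + 1) + (m - j0 - 2) * k + (k + 1 - min k (p (j0 + 1) - p j0)) < n"
begin

definition "P0 = p j0"
definition "Q0 = p (j0 + 1)"
definition "g = Q0 - P0"
definition "extra = g - k"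
definition "tail = k + 1 - min k g"
definition "R0 = Q0 + 1 + (m - j0 - 2) * k"
definition "mid = P0 + extra + 1"
definition "far = R0 + tail - 1"

lemma k_ge_2: "2 \<le> k" using gap_ge gap_le by simp
lemma g_bounds: "2 \<le> g" "g + 2 \<le> 2 * k" "Q0 = P0 + g"
  using gap_ge gap_le by (auto simp: g_def P0_def Q0_def)
lemma extra_bound: "extra + 2 \<le> k" using g_bounds by (simp add: extra_def)
lemma mid_less_Q0: "mid < Q0" using g_bounds k_ge_2 by (simp add: mid_def extra_def)
lemma tail_pos: "1 \<le> tail" using g_bounds by (simp add: tail_def extra_def)
lemma Q0_mid_tail: "Q0 - mid + tail = k" using g_bounds k_ge_2 by (simp add: tail_def extra_def mid_def)
lemma far_less: "far < n" using room tail_pos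
  by (simp add: far_def R0_def tail_def g_def P0_def Q0_def)
lemma R0_le_far: "R0 \<le> far" using tail_pos by (simp add: far_def)
lemma Q0_lt_R0: "Q0 < R0" by (simp add: R0_def)
lemma core_less_mid: "P0 + extra < mid" by (simp add: mid_def)

lemma p_mono: "i < j \<Longrightarrow> j < m \<Longrightarrow> p i < p j"
proof (induction j)
  case 0 then show ?case by simp
next
  case (Suc j)
  then have "p j < p (Suc j)" using p_step[of j] by simp
  then show ?case using Suc by (cases "i = j") auto
qed

lemma p_left: "j < j0 \<Longrightarrow> p j < P0" using p_mono j0_less by (simp add: P0_def)
lemma p_right: "j0 + 1 < j \<Longrightarrow> j < m \<Longrightarrow> Q0 < p j" using p_mono by (simp add: Q0_def)

definition pos :: "nat \<Rightarrow> real" where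
  "pos t = (if t < P0 then 0 else if t \<le> P0 + extra then 7/10 else if t = mid then 8/10
          else if t \<le> Q0 then 9/10 else 1)"

definition loc :: "nat \<Rightarrow> real" where "loc j = pos (p j)"

lemma pos_left: "t < P0 \<Longrightarrow> pos t = 0" by (simp add: pos_def)
lemma pos_core: "P0 \<le> t \<Longrightarrow> t \<le> P0 + extra \<Longrightarrow> pos t = 7/10" by (simp add: pos_def)
lemma pos_mid: "pos mid = 8/10" by (simp add: pos_def mid_def)
lemma pos_near: "mid < t \<Longrightarrow> t \<le> Q0 \<Longrightarrow> pos t = 9/10" using core_less_mid by (simp add: pos_def)
lemma pos_right: "Q0 < t \<Longrightarrow> pos t = 1" using mid_less_Q0 core_less_mid by (simp add: pos_def)

lemma pos_cases: "pos t = 0 \<or> pos t = 7/10 \<or> pos t = 8/10 \<or> pos t = 9/10 \<or> pos t = 1"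
  by (simp add: pos_def)

lemma pos_eq_core_iff: "pos t = 7/10 \<longleftrightarrow> P0 \<le> t \<and> t \<le> P0 + extra" by (auto simp: pos_def)
lemma pos_eq_mid_iff: "pos t = 8/10 \<longleftrightarrow> t = mid" using core_less_mid by (auto simp: pos_def)
lemma pos_eq_near_iff: "pos t = 9/10 \<longleftrightarrow> mid < t \<and> t \<le> Q0" using core_less_mid by (auto simp: pos_def mid_def)

lemma loc_left: "j < j0 \<Longrightarrow> loc j = 0" using p_left by (simp add: loc_def pos_left)
lemma loc_j0: "loc j0 = 7/10" by (simp add: loc_def pos_core P0_def)
lemma loc_j1: "loc (j0 + 1) = 9/10" using mid_less_Q0 core_less_mid by (simp add: loc_def pos_def Q0_def)
lemma loc_right: "j0 + 1 < j \<Longrightarrow> j < m \<Longrightarrow> loc j = 1" using p_right by (simp add: loc_def pos_right)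

lemma loc_cases: "j < m \<Longrightarrow> (j < j0 \<and> loc j = 0) \<or> (j = j0 \<and> loc j = 7/10) \<or> (j = j0 + 1 \<and> loc j = 9/10)
   \<or> (j0 + 1 < j \<and> loc j = 1)"
  using loc_left loc_j0 loc_j1 loc_right by (metis linorder_neqE_nat Suc_eq_plus1 less_SucE)

lemma rank_cases:
  obtains (left_block) "t < P0" "t < j0 * k" | (left_rest) "t < P0" "j0 * k \<le> t"
    | (core) "P0 \<le> t" "t \<le> P0 + extra" | (mid) "t = mid" | (near) "mid < t" "t \<le> Q0"
    | (right_block) "Q0 < t" "t < R0" | (tail) "R0 \<le> t" "t < far" | (far) "t = far" | (beyond) "far < t"
  unfolding mid_def by atomize_elim linarith

definition strategy :: "bool \<Rightarrow> nat \<Rightarrow> nat" where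
  "strategy f t = (if t < P0 then (if t < j0 * k then t div k else j0)
     else if t \<le> P0 + extra then j0
     else if t = mid then (if f then j0 + 1 else j0)
     else if t \<le> Q0 then j0 + 1
     else if t < R0 then j0 + 2 + (t - Q0 - 1) div k
     else if t < far then j0 + 1
     else if t = far then (if f then j0 else j0 + 1)
     else j0)"

lemma strategy_left_block: "t < P0 \<Longrightarrow> t < j0 * k \<Longrightarrow> strategy f t = t div k" by (simp add: strategy_def)
lemma strategy_left_rest: "t < P0 \<Longrightarrow> j0 * k \<le> t \<Longrightarrow> strategy f t = j0" by (simp add: strategy_def)
lemma strategy_core: "P0 \<le> t \<Longrightarrow> t \<le> P0 + extra \<Longrightarrow> strategy f t = j0" by (simp add: strategy_def)
lemma strategy_mid: "strategy f mid = (if f then j0 + 1 else j0)" using core_less_mid by (simp add: strategy_def)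
lemma strategy_near: "mid < t \<Longrightarrow> t \<le> Q0 \<Longrightarrow> strategy f t = j0 + 1" using core_less_mid by (simp add: strategy_def)
lemma strategy_right_block: "Q0 < t \<Longrightarrow> t < R0 \<Longrightarrow> strategy f t = j0 + 2 + (t - Q0 - 1) div k"
  using core_less_mid mid_less_Q0 by (simp add: strategy_def)
lemma strategy_tail: "R0 \<le> t \<Longrightarrow> t < far \<Longrightarrow> strategy f t = j0 + 1"
  using core_less_mid mid_less_Q0 Q0_lt_R0 by (simp add: strategy_def)
lemma strategy_far: "strategy f far = (if f then j0 else j0 + 1)"
  using core_less_mid mid_less_Q0 Q0_lt_R0 R0_le_far by (simp add: strategy_def)
lemma strategy_beyond: "far < t \<Longrightarrow> strategy f t = j0"
  using core_less_mid mid_less_Q0 Q0_lt_R0 R0_le_far by (simp add: strategy_def)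

lemma left_block_index: "t < P0 \<Longrightarrow> t < j0 * k \<Longrightarrow> t div k < j0"
  by (simp add: less_mult_imp_div_less)

lemma right_block_index: "Q0 < t \<Longrightarrow> t < R0 \<Longrightarrow> j0 + 2 + (t - Q0 - 1) div k < m"
proof -
  assume "Q0 < t" "t < R0"
  then have "t - Q0 - 1 < (m - j0 - 2) * k" by (simp add: R0_def)
  then have "(t - Q0 - 1) div k < m - j0 - 2" by (simp add: less_mult_imp_div_less)
  then show ?thesis by simp
qed

lemma strategy_less: "strategy f t < m"
proof -
  have "t div k < j0" if "t < P0" "t < j0 * k" using left_block_index that .
  then show ?thesis using j0_less right_block_index unfolding strategy_def by auto
qed

lemma profile_strategy: "profile m n (strategy f)" by (simp add: profile_def strategy_less)

lemma loc_Suc_j0: "loc (Suc j0) = 9/10" using loc_j1 by simp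

lemma pos_unit: "0 \<le> pos t \<and> pos t \<le> 1" by (simp add: pos_def)
lemma loc_unit: "0 \<le> loc j \<and> loc j \<le> 1" by (simp add: loc_def pos_unit)
lemma dist_le_1: "\<bar>pos t - loc j\<bar> \<le> 1" using pos_unit[of t] loc_unit[of j] by auto

lemma strategy_eq_j0_iff: "strategy f a = j0 \<longleftrightarrow>
   (a < P0 \<and> j0 * k \<le> a) \<or> (P0 \<le> a \<and> a \<le> P0 + extra) \<or> (a = mid \<and> \<not> f) \<or> (a = far \<and> f) \<or> far < a"
proof -
  have "a div k < j0" if "a < P0" "a < j0 * k" using left_block_index that .
  then show ?thesis using core_less_mid mid_less_Q0 Q0_lt_R0 R0_le_far unfolding strategy_def mid_def by auto
qed

lemma strategy_eq_Suc_j0_iff: "strategy f a = j0 + 1 \<longleftrightarrow>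
   (a = mid \<and> f) \<or> (mid < a \<and> a \<le> Q0) \<or> (R0 \<le> a \<and> a < far) \<or> (a = far \<and> \<not> f)"
proof -
  have "a div k < j0" if "a < P0" "a < j0 * k" using left_block_index that .
  then show ?thesis using core_less_mid mid_less_Q0 Q0_lt_R0 R0_le_far unfolding strategy_def mid_def by auto
qed

lemma strategy_less_j0: "strategy f a < j0 \<Longrightarrow> a < P0 \<and> a < j0 * k \<and> strategy f a = a div k"
  unfolding strategy_def by (auto split: if_splits)

lemma strategy_greater_Suc_j0: "j0 + 1 < strategy f a \<Longrightarrow> Q0 < a \<and> a < R0 \<and> strategy f a = j0 + 2 + (a - Q0 - 1) div k"
proof -
  have "a div k < j0" if "a < P0" "a < j0 * k" using left_block_index that .
  then show "j0 + 1 < strategy f a \<Longrightarrow> ?thesis" using core_less_mid unfolding strategy_def by (auto split: if_splits)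
qed

abbreviation "payoff f \<equiv> util n k (\<lambda>i. i) pos loc (strategy f)"
abbreviation "deviation_payoff f t j \<equiv> util n k (\<lambda>i. i) pos loc ((strategy f)(t := j)) t"
abbreviation "is_served f t \<equiv> served n k (\<lambda>i. i) pos loc (strategy f) t"
abbreviation "ahead f t \<equiv> {a. a < n \<and> strategy f a = strategy f t \<and> beats (\<lambda>i. i) pos (loc (strategy f t)) a t}"

lemma card_block_minus: "card ({b * k..<b * k + k} - {t}) < k" if "t \<in> {b * k..<b * k + k}"
  using that k_ge_2 by (simp add: card_Diff_singleton)

lemma mem_div_block: "t \<in> {(t div k) * k..<(t div k) * k + k}"
proof -
  have e: "t div k * k + t mod k = t" by (rule div_mult_mod_eq)
  have l: "t mod k < k" using k_ge_2 by simp
  show ?thesis using e l unfolding atLeastLessThan_iff by linarith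
qed

lemma served_left_block: assumes "t < P0" "t < j0 * k" shows "is_served f t"
proof (rule served_if_beating_subset)
  let ?b = "t div k"
  show "ahead f t \<subseteq> {?b * k..<?b * k + k} - {t}"
  proof
    fix a assume a: "a \<in> ahead f t"
    have st: "strategy f t = ?b" "?b < j0" using strategy_left_block left_block_index assms by auto
    have lt: "strategy f a < j0" using a st by simp
    have "strategy f a = a div k" using strategy_less_j0[OF lt] by blast
    then have "a div k = ?b" using a st by simp
    moreover have "a \<noteq> t" using a beats_irrefl by auto
    ultimately show "a \<in> {?b * k..<?b * k + k} - {t}" using mem_div_block[of a] by simp
  qed
  show "finite ({?b * k..<?b * k + k} - {t})" by simp
  show "card ({?b * k..<?b * k + k} - {t}) < k" by (rule card_block_minus[OF mem_div_block])
qed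

lemma served_core: assumes "P0 \<le> t" "t \<le> P0 + extra" shows "is_served f t"
proof (rule served_if_beating_subset)
  show "ahead f t \<subseteq> {P0..<t}"
  proof
    fix a assume a: "a \<in> ahead f t"
    have st: "strategy f t = j0" using strategy_core assms by auto
    have pt: "pos t = 7/10" using pos_core assms by auto
    have b: "\<bar>pos a - 7/10\<bar> < 0 \<or> (\<bar>pos a - 7/10\<bar> = 0 \<and> a < t)"
      using a st by (simp add: beats_id_iff pt loc_j0)
    then have "pos a = 7/10" "a < t" by auto
    then show "a \<in> {P0..<t}" using pos_eq_core_iff by auto
  qed
  show "finite {P0..<t}" by simp
  show "card {P0..<t} < k" using assms extra_bound by simp
qed

lemma served_mid_True: "is_served True mid"
proof (rule served_if_beating_subset)
  show "ahead True mid \<subseteq> {mid<..Q0}"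
  proof
    fix a assume a: "a \<in> ahead True mid"
    then have "strategy True a = j0 + 1" "a \<noteq> mid" using strategy_mid beats_irrefl by auto
    then have "(mid < a \<and> a \<le> Q0) \<or> (R0 \<le> a \<and> a < far)"
      using strategy_eq_Suc_j0_iff[of True a] by simp
    moreover have "\<not> (R0 \<le> a \<and> a < far)"
    proof
      assume "R0 \<le> a \<and> a < far"
      then have "pos a = 1" using pos_right Q0_lt_R0 by auto
      moreover have "\<bar>pos a - 9/10\<bar> < 1/10 \<or> (\<bar>pos a - 9/10\<bar> = 1/10 \<and> a < mid)"
        using a by (simp add: beats_id_iff strategy_mid pos_mid loc_Suc_j0)
      ultimately show False using \<open>R0 \<le> a \<and> a < far\<close> mid_less_Q0 Q0_lt_R0 by auto
    qed
    ultimately show "a \<in> {mid<..Q0}" by auto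
  qed
  show "finite {mid<..Q0}" by simp
  show "card {mid<..Q0} < k" using Q0_mid_tail tail_pos by simp
qed

lemma served_mid_False: "is_served False mid"
proof (rule served_if_beating_subset)
  show "ahead False mid \<subseteq> {P0..P0 + extra}"
  proof
    fix a assume a: "a \<in> ahead False mid"
    then have "\<bar>pos a - 7/10\<bar> < 1/10 \<or> (\<bar>pos a - 7/10\<bar> = 1/10 \<and> a < mid)"
      by (simp add: beats_id_iff strategy_mid pos_mid loc_j0)
    moreover have "pos a \<noteq> 8/10" using a beats_irrefl pos_eq_mid_iff by auto
    ultimately have "pos a = 7/10" using pos_cases[of a] by auto
    then show "a \<in> {P0..P0 + extra}" using pos_eq_core_iff by auto
  qed
  show "finite {P0..P0 + extra}" by simp
  show "card {P0..P0 + extra} < k" using extra_bound by simp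
qed

lemma served_mid: "is_served f mid"
  using served_mid_True served_mid_False by (cases f) simp_all

lemma served_near: assumes "mid < t" "t \<le> Q0" shows "is_served f t"
proof (rule served_if_beating_subset)
  show "ahead f t \<subseteq> {mid<..<t}"
  proof
    fix a assume a: "a \<in> ahead f t"
    have st: "strategy f t = j0 + 1" using strategy_near assms by auto
    have pt: "pos t = 9/10" using pos_near assms by auto
    have b: "\<bar>pos a - 9/10\<bar> < 0 \<or> (\<bar>pos a - 9/10\<bar> = 0 \<and> a < t)"
      using a st by (simp add: beats_id_iff pt loc_Suc_j0)
    then have "pos a = 9/10" "a < t" by auto
    then show "a \<in> {mid<..<t}" using pos_eq_near_iff by auto
  qed
  show "finite {mid<..<t}" by simp
  show "card {mid<..<t} < k" using assms Q0_mid_tail tail_pos by simp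
qed

lemma served_right_block: assumes "Q0 < t" "t < R0" shows "is_served f t"
proof (rule served_if_beating_subset)
  let ?b = "(t - Q0 - 1) div k"
  let ?B = "(\<lambda>u. u + (Q0 + 1)) ` ({?b * k..<?b * k + k} - {t - Q0 - 1})"
  show "ahead f t \<subseteq> ?B"
  proof
    fix a assume a: "a \<in> ahead f t"
    have st: "strategy f t = j0 + 2 + ?b" using strategy_right_block assms by auto
    have gt: "j0 + 1 < strategy f a" using a st by simp
    have ha: "Q0 < a" "a < R0" "strategy f a = j0 + 2 + (a - Q0 - 1) div k" using strategy_greater_Suc_j0[OF gt] by auto
    then have "(a - Q0 - 1) div k = ?b" using a st by simp
    moreover have "a \<noteq> t" using a beats_irrefl by auto
    ultimately have "a - Q0 - 1 \<in> {?b * k..<?b * k + k} - {t - Q0 - 1}"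
      using mem_div_block[of "a - Q0 - 1"] ha assms by auto
    moreover have "a = (a - Q0 - 1) + (Q0 + 1)" using ha by simp
    ultimately show "a \<in> ?B" by blast
  qed
  show "finite ?B" by simp
  have "card ?B \<le> card ({?b * k..<?b * k + k} - {t - Q0 - 1})" by (rule card_image_le) simp
  also have "\<dots> < k" by (rule card_block_minus[OF mem_div_block])
  finally show "card ?B < k" .
qed

lemma served_tail: assumes "R0 \<le> t" "t < far \<or> (t = far \<and> \<not> f)" shows "is_served f t"
proof (rule served_if_beating_subset)
  let ?K = "(if f then {mid..Q0} else {mid<..Q0}) \<union> {R0..<t}"
  show "ahead f t \<subseteq> ?K"
  proof
    fix a assume a: "a \<in> ahead f t"
    have st: "strategy f t = j0 + 1" using strategy_tail strategy_far assms by auto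
    have pt: "pos t = 1" using pos_right assms Q0_lt_R0 by auto
    have sa: "strategy f a = j0 + 1" using a st by simp
    have b: "\<bar>pos a - 9/10\<bar> < 1/10 \<or> (\<bar>pos a - 9/10\<bar> = 1/10 \<and> a < t)"
      using a st by (simp add: beats_id_iff pt loc_Suc_j0)
    have cs: "(a = mid \<and> f) \<or> (mid < a \<and> a \<le> Q0) \<or> (R0 \<le> a \<and> a < far) \<or> (a = far \<and> \<not> f)"
      using sa strategy_eq_Suc_j0_iff by blast
    have far: "a < t" if "R0 \<le> a"
    proof -
      have "pos a = 1" using pos_right Q0_lt_R0 that by auto
      then show ?thesis using b by auto
    qed
    show "a \<in> ?K"
    proof (cases f)
      case True then show ?thesis using cs far R0_le_far mid_less_Q0 by auto
    next
      case False then show ?thesis using cs far R0_le_far by auto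
    qed
  qed
  show "finite ?K" by simp
  have "card ?K \<le> card (if f then {mid..Q0} else {mid<..Q0}) + card {R0..<t}" by (rule card_Un_le)
  also have "\<dots> < k" using assms Q0_mid_tail tail_pos mid_less_Q0 by (cases f) (auto simp: far_def)
  finally show "card ?K < k" .
qed

lemma served_far_True: "is_served True far"
proof (rule served_if_beating_subset)
  show "ahead True far \<subseteq> {P0..P0 + extra}"
  proof
    fix a assume a: "a \<in> ahead True far"
    have st: "strategy True far = j0" using strategy_far by auto
    have pt: "pos far = 1" using pos_right R0_le_far Q0_lt_R0 by auto
    have sa: "strategy True a = j0" using a st by simp
    have b: "\<bar>pos a - 7/10\<bar> < 3/10 \<or> (\<bar>pos a - 7/10\<bar> = 3/10 \<and> a < far)"
      using a st by (simp add: beats_id_iff pt loc_j0)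
    have cs: "(a < P0 \<and> j0 * k \<le> a) \<or> (P0 \<le> a \<and> a \<le> P0 + extra) \<or> (a = mid \<and> \<not> True) \<or> (a = far \<and> True) \<or> far < a"
      using sa strategy_eq_j0_iff by blast
    have n1: "\<not> (a < P0)"
    proof
      assume "a < P0" then have "pos a = 0" by (rule pos_left)
      then show False using b by auto
    qed
    have n2: "\<not> (far \<le> a)"
    proof
      assume "far \<le> a" then have "pos a = 1" using pos_right Q0_lt_R0 R0_le_far by auto
      then show False using b \<open>far \<le> a\<close> by auto
    qed
    show "a \<in> {P0..P0 + extra}" using cs n1 n2 by auto
  qed
  show "finite {P0..P0 + extra}" by simp
  show "card {P0..P0 + extra} < k" using extra_bound by simp
qed

lemma payoff_served: "is_served f t \<Longrightarrow> payoff f t = 1 - \<bar>pos t - loc (strategy f t)\<bar>" by (simp add: util_def)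

lemma no_gain_if_nearest:
  assumes "is_served f t" "\<forall>j<m. \<bar>pos t - loc (strategy f t)\<bar> \<le> \<bar>pos t - loc j\<bar>" "j < m"
  shows "deviation_payoff f t j \<le> payoff f t"
  by (rule util_update_le_if_nearest[OF assms(1) strategy_less assms(2) _ assms(3)]) (simp add: dist_le_1)

lemma right_block:
  assumes j1: "j0 + 1 < j" and jm: "j < m"
  defines "B \<equiv> {Q0 + 1 + (j - j0 - 2) * k..<Q0 + 1 + (j - j0 - 2) * k + k}"
  shows "card B = k" "a \<in> B \<Longrightarrow> Q0 < a \<and> a < R0 \<and> strategy f a = j \<and> pos a = 1"
proof -
  show "card B = k" by (simp add: B_def)
  assume a: "a \<in> B"
  have "(j - j0 - 2) * k + k \<le> (m - j0 - 2) * k"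
  proof -
    have "j - j0 - 2 + 1 \<le> m - j0 - 2" using j1 jm by simp
    then have "(j - j0 - 2 + 1) * k \<le> (m - j0 - 2) * k" by (rule mult_right_mono) simp
    then show ?thesis by (simp add: algebra_simps)
  qed
  then have lt: "Q0 < a" "a < R0" using a by (auto simp: B_def R0_def)
  define q where "q = j - j0 - 2"
  define r where "r = a - Q0 - 1 - q * k"
  have ur: "a - Q0 - 1 = q * k + r" "r < k" using a by (auto simp: B_def q_def r_def)
  have "(q * k + r) div k = q" using ur(2) k_ge_2 by simp
  then have "(a - Q0 - 1) div k = j - j0 - 2" using ur(1) by (simp add: q_def)
  then have "strategy f a = j" using strategy_right_block[OF lt] j1 by simp
  then show "Q0 < a \<and> a < R0 \<and> strategy f a = j \<and> pos a = 1" using lt pos_right by simp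
qed

lemma deviation_right_block_zero:
  assumes j1: "j0 + 1 < j" and jm: "j < m" and t: "R0 \<le> t" "t < n"
  shows "deviation_payoff f t j = 0"
proof -
  define B where "B = {Q0 + 1 + (j - j0 - 2) * k..<Q0 + 1 + (j - j0 - 2) * k + k}"
  have cB: "card B = k" using right_block(1)[OF j1 jm] by (simp add: B_def)
  have pt: "pos t = 1" using t Q0_lt_R0 pos_right by simp
  have yj: "loc j = 1" using loc_right[OF j1 jm] .
  show ?thesis
  proof (rule util_update_eq_0_if_beaten)
    show "finite B" by (simp add: B_def)
    show "k \<le> card B" using cB by simp
    show "B \<subseteq> {a. a < n \<and> a \<noteq> t \<and> strategy f a = j \<and> beats (\<lambda>i. i) pos (loc j) a t}"
    proof
      fix a assume "a \<in> B"
      then have h: "Q0 < a" "a < R0" "strategy f a = j" "pos a = 1" using right_block(2)[OF j1 jm] by (auto simp: B_def)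
      then show "a \<in> {a. a < n \<and> a \<noteq> t \<and> strategy f a = j \<and> beats (\<lambda>i. i) pos (loc j) a t}"
        using t pt yj by (auto simp: beats_id_iff)
    qed
  qed
qed

text \<open>The \<open>k\<close> agents served at facility \<open>j0 + 1\<close>; they keep every other agent from being served there.\<close>

definition crowd :: "bool \<Rightarrow> nat set" where
  "crowd f = (if f then {mid..Q0} \<union> {R0..<far} else {mid<..Q0} \<union> {R0..far})"

lemma card_crowd: "card (crowd f) = k"
proof -
  have d1: "{mid..Q0} \<inter> {R0..<far} = {}" "{mid<..Q0} \<inter> {R0..far} = {}" using Q0_lt_R0 by auto
  show ?thesis
  proof (cases f)
    case True
    then have "card (crowd f) = card {mid..Q0} + card {R0..<far}" using d1 by (simp add: crowd_def card_Un_disjoint)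
    then show ?thesis using Q0_mid_tail mid_less_Q0 tail_pos by (simp add: far_def)
  next
    case False
    then have "card (crowd f) = card {mid<..Q0} + card {R0..far}" using d1 by (simp add: crowd_def card_Un_disjoint)
    then show ?thesis using Q0_mid_tail mid_less_Q0 tail_pos R0_le_far by (simp add: far_def)
  qed
qed

lemma crowd_mem: "a \<in> crowd f \<Longrightarrow> strategy f a = j0 + 1 \<and> a \<le> far \<and> \<bar>pos a - 9/10\<bar> \<le> 1/10 \<and> (f \<longrightarrow> a < far)"
proof -
  assume a: "a \<in> crowd f"
  have cs: "(a = mid \<and> f) \<or> (mid < a \<and> a \<le> Q0) \<or> (R0 \<le> a \<and> a < far) \<or> (a = far \<and> \<not> f)"
    using a by (cases f) (auto simp: crowd_def)
  have s: "strategy f a = j0 + 1" using cs strategy_eq_Suc_j0_iff[of f a] by blast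
  have le: "a \<le> far" "f \<longrightarrow> a < far" using cs mid_less_Q0 Q0_lt_R0 R0_le_far by auto
  have "pos a = 8/10 \<or> pos a = 9/10 \<or> pos a = 1"
    using cs pos_mid pos_near[of a] pos_right[of a] Q0_lt_R0 R0_le_far by auto
  then have "\<bar>pos a - 9/10\<bar> \<le> 1/10" by auto
  then show ?thesis using s le by simp
qed

lemma deviation_crowd_zero:
  assumes t: "t < n" "t \<notin> crowd f" and bt: "\<And>a. a \<in> crowd f \<Longrightarrow> beats (\<lambda>i. i) pos (9/10) a t"
  shows "deviation_payoff f t (j0 + 1) = 0"
proof (rule util_update_eq_0_if_beaten)
  show "finite (crowd f)" by (simp add: crowd_def)
  show "k \<le> card (crowd f)" by (simp add: card_crowd)
  show "crowd f \<subseteq> {a. a < n \<and> a \<noteq> t \<and> strategy f a = j0 + 1 \<and> beats (\<lambda>i. i) pos (loc (j0 + 1)) a t}"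
  proof
    fix a assume a: "a \<in> crowd f"
    have h: "strategy f a = j0 + 1" "a \<le> far" using crowd_mem[OF a] by auto
    have "a \<noteq> t" using a t by auto
    then show "a \<in> {a. a < n \<and> a \<noteq> t \<and> strategy f a = j0 + 1 \<and> beats (\<lambda>i. i) pos (loc (j0 + 1)) a t}"
      using h bt[OF a] far_less by (simp add: loc_Suc_j0)
  qed
qed

lemma payoff_nonneg: "0 \<le> payoff f t" by (rule util_nonneg) (simp add: dist_le_1)

lemma no_gain_left_block: assumes "t < P0" "t < j0 * k" "j < m" shows "deviation_payoff f t j \<le> payoff f t"
proof (rule no_gain_if_nearest[OF served_left_block[OF assms(1,2)] _ assms(3)])
  have "loc (strategy f t) = 0" using strategy_left_block[OF assms(1,2)] left_block_index[OF assms(1,2)] loc_left by simp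
  then show "\<forall>j<m. \<bar>pos t - loc (strategy f t)\<bar> \<le> \<bar>pos t - loc j\<bar>" using pos_left[OF assms(1)] by simp
qed

lemma no_gain_core: assumes "P0 \<le> t" "t \<le> P0 + extra" "j < m" shows "deviation_payoff f t j \<le> payoff f t"
proof (rule no_gain_if_nearest[OF served_core[OF assms(1,2)] _ assms(3)])
  show "\<forall>j<m. \<bar>pos t - loc (strategy f t)\<bar> \<le> \<bar>pos t - loc j\<bar>"
    by (simp add: pos_core[OF assms(1,2)] strategy_core[OF assms(1,2)] loc_j0)
qed

lemma no_gain_mid: assumes "j < m" shows "deviation_payoff f mid j \<le> payoff f mid"
proof (rule no_gain_if_nearest[OF served_mid _ assms])
  have d: "\<bar>pos mid - loc (strategy f mid)\<bar> = 1/10" by (cases f) (simp_all add: pos_mid strategy_mid loc_j0 loc_Suc_j0)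
  show "\<forall>j<m. \<bar>pos mid - loc (strategy f mid)\<bar> \<le> \<bar>pos mid - loc j\<bar>"
  proof (intro allI impI)
    fix j assume "j < m"
    then have "1/10 \<le> \<bar>pos mid - loc j\<bar>" using loc_cases[of j] by (auto simp: pos_mid)
    then show "\<bar>pos mid - loc (strategy f mid)\<bar> \<le> \<bar>pos mid - loc j\<bar>" using d by simp
  qed
qed

lemma no_gain_near: assumes "mid < t" "t \<le> Q0" "j < m" shows "deviation_payoff f t j \<le> payoff f t"
proof (rule no_gain_if_nearest[OF served_near[OF assms(1,2)] _ assms(3)])
  show "\<forall>j<m. \<bar>pos t - loc (strategy f t)\<bar> \<le> \<bar>pos t - loc j\<bar>"
    by (simp add: pos_near[OF assms(1,2)] strategy_near[OF assms(1,2)] loc_Suc_j0)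
qed

lemma no_gain_right_block: assumes "Q0 < t" "t < R0" "j < m" shows "deviation_payoff f t j \<le> payoff f t"
proof (rule no_gain_if_nearest[OF served_right_block[OF assms(1,2)] _ assms(3)])
  have "loc (strategy f t) = 1" using strategy_right_block[OF assms(1,2)] right_block_index[OF assms(1,2)] loc_right by simp
  then show "\<forall>j<m. \<bar>pos t - loc (strategy f t)\<bar> \<le> \<bar>pos t - loc j\<bar>" using pos_right[OF assms(1)] by simp
qed

lemma deviation_left_block_zero:
  assumes j: "j < j0" and t: "t < P0" "j0 * k \<le> t"
  shows "deviation_payoff f t j = 0"
proof (rule util_update_eq_0_if_beaten)
  show "{j * k..<j * k + k} \<subseteq> {a. a < n \<and> a \<noteq> t \<and> strategy f a = j \<and> beats (\<lambda>i. i) pos (loc j) a t}"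
  proof
    fix a assume a: "a \<in> {j * k..<j * k + k}"
    have "j * k + k \<le> j0 * k" using j by (metis add.commute mult_Suc mult_le_mono1 Suc_leI)
    then have at: "a < t" "a < j0 * k" "a < P0" using a t by auto
    have "a div k = j"
    proof -
      define r where "r = a - j * k"
      have "a = j * k + r" "r < k" using a by (auto simp: r_def)
      then show ?thesis using k_ge_2 by simp
    qed
    moreover have "t < n" using t(1) p_less[of j0] j0_less by (simp add: P0_def)
    ultimately show "a \<in> {a. a < n \<and> a \<noteq> t \<and> strategy f a = j \<and> beats (\<lambda>i. i) pos (loc j) a t}"
      using at strategy_left_block[OF at(3,2)] pos_left[OF t(1)] pos_left[OF at(3)] loc_left[OF j]
      by (simp add: beats_id_iff)
  qed
qed simp_all

lemma no_gain_left_rest: assumes t: "t < P0" "j0 * k \<le> t" and j: "j < m" shows "deviation_payoff f t j \<le> payoff f t"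
proof -
  have st: "strategy f t = j0" using strategy_left_rest[OF t] .
  have pt: "pos t = 0" using pos_left[OF t(1)] .
  have tn: "t < n" using t(1) p_less[of j0] j0_less by (simp add: P0_def)
  consider "j < j0" | "j = j0" | "j = j0 + 1" | "j0 + 1 < j" by linarith
  then show ?thesis
  proof cases
    case 1
    have "deviation_payoff f t j = 0" by (rule deviation_left_block_zero[OF 1 t])
    then show ?thesis using payoff_nonneg by simp
  next
    case 2
    have "(strategy f)(t := j) = strategy f" using st 2 by auto
    then show ?thesis by simp
  next
    case 3
    have "deviation_payoff f t (j0 + 1) = 0"
    proof (rule deviation_crowd_zero)
      show "t < n" by (rule tn)
      show "t \<notin> crowd f" using t core_less_mid mid_less_Q0 Q0_lt_R0 by (auto simp: crowd_def)
      fix a assume "a \<in> crowd f"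
      then have "\<bar>pos a - 9/10\<bar> \<le> 1/10" using crowd_mem by blast
      then show "beats (\<lambda>i. i) pos (9/10) a t" using pt by (simp add: beats_id_iff)
    qed
    then show ?thesis using 3 payoff_nonneg by simp
  next
    case 4
    have "deviation_payoff f t j \<le> 0" by (rule util_update_nonpos) (simp add: pt loc_right[OF 4 j])
    then show ?thesis using payoff_nonneg order.trans by blast
  qed
qed

lemma no_gain_tail: assumes t: "R0 \<le> t" "t < far \<or> (t = far \<and> \<not> f)" and j: "j < m" shows "deviation_payoff f t j \<le> payoff f t"
proof -
  have st: "strategy f t = j0 + 1" using strategy_tail strategy_far t by auto
  have pt: "pos t = 1" using pos_right t Q0_lt_R0 by simp
  have tn: "t < n" using t far_less by auto
  have U9: "payoff f t = 9/10" using payoff_served[OF served_tail[OF t]] st pt by (simp add: loc_Suc_j0)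
  consider "j < j0" | "j = j0" | "j = j0 + 1" | "j0 + 1 < j" by linarith
  then show ?thesis
  proof cases
    case 1
    have "deviation_payoff f t j \<le> 0" by (rule util_update_nonpos) (simp add: pt loc_left[OF 1])
    then show ?thesis using U9 by simp
  next
    case 2
    have "deviation_payoff f t j \<le> 1 - \<bar>pos t - loc j\<bar>" by (rule util_update_le) (simp add: dist_le_1)
    then show ?thesis using U9 2 pt loc_j0 by simp
  next
    case 3
    have "(strategy f)(t := j) = strategy f" using st 3 by auto
    then show ?thesis by simp
  next
    case 4 then show ?thesis using deviation_right_block_zero[OF 4 j t(1) tn] U9 by simp
  qed
qed

lemma no_gain_far_True: assumes j: "j < m" shows "deviation_payoff True far j \<le> payoff True far"
proof -
  have st: "strategy True far = j0" using strategy_far by simp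
  have pt: "pos far = 1" using pos_right R0_le_far Q0_lt_R0 by simp
  have U7: "payoff True far = 7/10" using payoff_served[OF served_far_True] st pt loc_j0 by simp
  consider "j < j0" | "j = j0" | "j = j0 + 1" | "j0 + 1 < j" by linarith
  then show ?thesis
  proof cases
    case 1
    have "deviation_payoff True far j \<le> 0" by (rule util_update_nonpos) (simp add: pt loc_left[OF 1])
    then show ?thesis using U7 by simp
  next
    case 2
    have "(strategy True)(far := j) = strategy True" using st 2 by auto
    then show ?thesis by simp
  next
    case 3
    have "deviation_payoff True far (j0 + 1) = 0"
    proof (rule deviation_crowd_zero)
      show "far < n" by (rule far_less)
      show "far \<notin> crowd True" using crowd_mem by blast
      fix a assume "a \<in> crowd True"
      then have "\<bar>pos a - 9/10\<bar> \<le> 1/10" "a < far" using crowd_mem by blast+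
      then show "beats (\<lambda>i. i) pos (9/10) a far" using pt by (auto simp: beats_id_iff)
    qed
    then show ?thesis using 3 U7 by simp
  next
    case 4 then show ?thesis using deviation_right_block_zero[OF 4 j R0_le_far far_less] U7 by simp
  qed
qed

lemma no_gain_beyond: assumes t: "far < t" "t < n" and j: "j < m" shows "deviation_payoff f t j \<le> payoff f t"
proof -
  have st: "strategy f t = j0" using strategy_beyond[OF t(1)] .
  have pt: "pos t = 1" using pos_right t R0_le_far Q0_lt_R0 by simp
  consider "j < j0" | "j = j0" | "j = j0 + 1" | "j0 + 1 < j" by linarith
  then show ?thesis
  proof cases
    case 1
    have "deviation_payoff f t j \<le> 0" by (rule util_update_nonpos) (simp add: pt loc_left[OF 1])
    then show ?thesis using payoff_nonneg order.trans by blast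
  next
    case 2
    have "(strategy f)(t := j) = strategy f" using st 2 by auto
    then show ?thesis by simp
  next
    case 3
    have "deviation_payoff f t (j0 + 1) = 0"
    proof (rule deviation_crowd_zero)
      show "t < n" by (rule t(2))
      show "t \<notin> crowd f" using crowd_mem t(1) by fastforce
      fix a assume "a \<in> crowd f"
      then have "\<bar>pos a - 9/10\<bar> \<le> 1/10" "a \<le> far" using crowd_mem by blast+
      then show "beats (\<lambda>i. i) pos (9/10) a t" using pt t(1) by (auto simp: beats_id_iff)
    qed
    then show ?thesis using 3 payoff_nonneg by simp
  next
    case 4 then show ?thesis using deviation_right_block_zero[OF 4 j _ t(2)] t(1) R0_le_far payoff_nonneg by simp
  qed
qed

lemma no_gain: assumes "t < n" "j < m" shows "deviation_payoff f t j \<le> payoff f t"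
proof (cases t rule: rank_cases)
  case far
  then show ?thesis using no_gain_far_True no_gain_tail R0_le_far assms by (cases f) auto
qed (use assms no_gain_left_block no_gain_left_rest no_gain_core no_gain_mid no_gain_near
    no_gain_right_block no_gain_tail no_gain_beyond in auto)

lemma NE_strategy: "is_NE m n k (\<lambda>i. i) pos loc (strategy f)"
  unfolding is_NE_def using profile_strategy no_gain by blast

lemma strategy_True_False: "a \<noteq> mid \<Longrightarrow> a \<noteq> far \<Longrightarrow> strategy True a = strategy False a"
  by (simp add: strategy_def)

lemma payoff_eq_at_j0:
  assumes t: "t < n" "t \<noteq> mid" "t \<noteq> far" and st: "strategy True t = j0"
    and bD: "beats (\<lambda>i. i) pos (7/10) far t" and bM: "beats (\<lambda>i. i) pos (7/10) mid t"
  shows "payoff True t = payoff False t"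
proof -
  have stF: "strategy False t = j0" using st strategy_True_False t by simp
  define X where "X = {a. a < n \<and> a \<noteq> t \<and> a \<noteq> mid \<and> a \<noteq> far \<and> strategy True a = j0 \<and> beats (\<lambda>i. i) pos (7/10) a t}"
  have Mrn: "mid < n" using mid_less_Q0 p_less[of "j0+1"] j0_less by (simp add: Q0_def)
  have eT: "{a \<in> {0..<n}. a \<noteq> t \<and> strategy True a = strategy True t \<and> beats (\<lambda>i. i) pos (loc (strategy True t)) a t}
      = insert far X"
    using st bD t far_less strategy_far strategy_mid by (auto simp: X_def loc_j0)
  have eF: "{a \<in> {0..<n}. a \<noteq> t \<and> strategy False a = strategy False t \<and> beats (\<lambda>i. i) pos (loc (strategy False t)) a t}
      = insert mid X"
  proof (intro set_eqI iffI)
    fix a assume a: "a \<in> {a \<in> {0..<n}. a \<noteq> t \<and> strategy False a = strategy False t \<and> beats (\<lambda>i. i) pos (loc (strategy False t)) a t}"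
    have "a \<noteq> far" using a stF strategy_far[of False] by auto
    then show "a \<in> insert mid X" using a stF strategy_True_False[of a] by (auto simp: X_def loc_j0)
  next
    fix a assume a: "a \<in> insert mid X"
    show "a \<in> {a \<in> {0..<n}. a \<noteq> t \<and> strategy False a = strategy False t \<and> beats (\<lambda>i. i) pos (loc (strategy False t)) a t}"
    proof (cases "a = mid")
      case True then show ?thesis using stF bM t Mrn strategy_mid[of False] by (simp add: loc_j0)
    next
      case False then show ?thesis using a stF strategy_True_False[of a] by (auto simp: X_def loc_j0)
    qed
  qed
  have fX: "finite X" by (simp add: X_def)
  have "card (insert far X) = card (insert mid X)" using fX by (simp add: X_def)
  then have "is_served True t = is_served False t" unfolding served_def using eT eF by simp
  then show ?thesis using st stF by (simp add: util_def)
qed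

lemma payoff_eq: assumes "t < n" "t \<noteq> far" shows "payoff True t = payoff False t"
proof (cases t rule: rank_cases)
  case left_block
  then show ?thesis using served_left_block strategy_left_block by (simp add: util_def)
next
  case left_rest
  show ?thesis
  proof (rule payoff_eq_at_j0)
    show "beats (\<lambda>i. i) pos (7/10) far t" "beats (\<lambda>i. i) pos (7/10) mid t"
      using left_rest pos_left pos_mid pos_right[of far] R0_le_far Q0_lt_R0 by (simp_all add: beats_id_iff)
  qed (use assms left_rest core_less_mid strategy_left_rest in auto)
next
  case core
  then show ?thesis using served_core strategy_core by (simp add: util_def)
next
  case mid
  then show ?thesis using served_mid strategy_mid by (simp add: util_def pos_mid loc_j0 loc_Suc_j0)
next
  case near
  then show ?thesis using served_near strategy_near by (simp add: util_def)
next
  case right_block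
  then show ?thesis using served_right_block strategy_right_block by (simp add: util_def)
next
  case tail
  then show ?thesis using served_tail strategy_tail by (simp add: util_def)
next
  case beyond
  show ?thesis
  proof (rule payoff_eq_at_j0)
    show "beats (\<lambda>i. i) pos (7/10) far t" "beats (\<lambda>i. i) pos (7/10) mid t"
      using beyond pos_right[of t] pos_mid pos_right[of far] R0_le_far Q0_lt_R0 by (simp_all add: beats_id_iff)
  qed (use assms beyond R0_le_far Q0_lt_R0 mid_less_Q0 strategy_beyond in auto)
qed (use assms in simp)

lemma payoff_far: "payoff True far = 7/10" "payoff False far = 9/10"
proof -
  have pt: "pos far = 1" using pos_right R0_le_far Q0_lt_R0 by simp
  show "payoff True far = 7/10" using served_far_True strategy_far pt by (simp add: util_def loc_j0)
  have "is_served False far" using served_tail[of far False] R0_le_far by simp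
  then show "payoff False far = 9/10" using strategy_far pt by (simp add: util_def loc_Suc_j0)
qed

lemma SW_strategy_differ: "SW n k (\<lambda>i. i) pos loc (strategy True) \<noteq> SW n k (\<lambda>i. i) pos loc (strategy False)"
proof -
  have D: "far \<in> {..<n}" using far_less by simp
  have "SW n k (\<lambda>i. i) pos loc (strategy True) = payoff True far + (\<Sum>t\<in>{..<n} - {far}. payoff True t)"
    unfolding SW_def using D by (simp add: sum.remove)
  moreover have "SW n k (\<lambda>i. i) pos loc (strategy False) = payoff False far + (\<Sum>t\<in>{..<n} - {far}. payoff False t)"
    unfolding SW_def using D by (simp add: sum.remove)
  moreover have "(\<Sum>t\<in>{..<n} - {far}. payoff True t) = (\<Sum>t\<in>{..<n} - {far}. payoff False t)"
    by (rule sum.cong) (auto intro: payoff_eq)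
  ultimately show ?thesis using payoff_far by simp
qed

lemma pos_mono: "u \<le> u' \<Longrightarrow> pos u \<le> pos u'"
  unfolding pos_def using core_less_mid mid_less_Q0 by (auto simp: mid_def)
end

section \<open>Transfer to arbitrary priorities and to the reflected line\<close>

lemma util_cong_profile:
  assumes "\<forall>a<n. s a = s' a" "i < n"
  shows "util n k pr x y s i = util n k pr x y s' i"
proof -
  have "{a \<in> {0..<n}. a \<noteq> i \<and> s a = s i \<and> beats pr x (y (s i)) a i}
      = {a \<in> {0..<n}. a \<noteq> i \<and> s' a = s' i \<and> beats pr x (y (s' i)) a i}"
    using assms by auto
  then show ?thesis using assms by (simp add: util_def served_def)
qed

lemma util_cong_facilities: "y (s i) = y' (s i) \<Longrightarrow> util n k pr x y s i = util n k pr x y' s i"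
  by (simp add: util_def served_def)

lemma NE_cong_facilities:
  assumes "\<forall>j<m. y j = y' j" "is_NE m n k pr x y s"
  shows "is_NE m n k pr x y' s"
proof -
  have prof: "profile m n s" using assms(2) by (simp add: is_NE_def)
  have "util n k pr x y' (s(i := j)) i \<le> util n k pr x y' s i" if "i < n" "j < m" for i j
  proof -
    have "util n k pr x y' (s(i := j)) i = util n k pr x y (s(i := j)) i"
      using assms(1) that by (intro util_cong_facilities) simp
    also have "\<dots> \<le> util n k pr x y s i" using assms(2) that by (simp add: is_NE_def)
    also have "\<dots> = util n k pr x y' s i"
      using assms(1) prof that by (intro util_cong_facilities) (simp add: profile_def)
    finally show ?thesis .
  qed
  then show ?thesis using prof by (simp add: is_NE_def)
qed

lemma SW_cong_facilities:
  assumes "\<forall>j<m. y j = y' j" "profile m n s"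
  shows "SW n k pr x y s = SW n k pr x y' s"
  unfolding SW_def using assms by (intro sum.cong refl util_cong_facilities) (simp add: profile_def)

lemma beats_reflect: "beats pr (\<lambda>a. 1 - x a) (1 - yj) a b = beats pr x yj a b"
proof -
  have "\<bar>(1 - x c) - (1 - yj)\<bar> = \<bar>x c - yj\<bar>" for c by linarith
  then show ?thesis by (simp add: beats_def)
qed

lemma util_reflect:
  assumes s: "\<forall>a<n. s a < m" and i: "i < n"
  shows "util n k pr (\<lambda>a. 1 - x a) (\<lambda>j. 1 - y (m - 1 - j)) (\<lambda>a. m - 1 - s a) i = util n k pr x y s i"
proof -
  have "m - 1 - (m - 1 - s i) = s i" using s i by auto
  then have yi: "1 - y (m - 1 - (m - 1 - s i)) = 1 - y (s i)" by simp
  have "{a \<in> {0..<n}. a \<noteq> i \<and> m - 1 - s a = m - 1 - s i \<and> beats pr (\<lambda>a. 1 - x a) (1 - y (m - 1 - (m - 1 - s i))) a i}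
      = {a \<in> {0..<n}. a \<noteq> i \<and> s a = s i \<and> beats pr x (y (s i)) a i}"
  proof -
    have eqv: "(m - 1 - s a = m - 1 - s i) = (s a = s i)" if "a < n" for a
    proof -
      have "s a < m" "s i < m" using s i that by auto
      then show ?thesis by linarith
    qed
    show ?thesis unfolding yi beats_reflect using eqv by auto
  qed
  moreover have "\<bar>(1 - x i) - (1 - y (m - 1 - (m - 1 - s i)))\<bar> = \<bar>x i - y (s i)\<bar>" using yi by linarith
  ultimately show ?thesis by (simp add: util_def served_def)
qed

lemma NE_reflect:
  assumes ne: "is_NE m n k pr x y s" and m0: "0 < m"
  shows "is_NE m n k pr (\<lambda>a. 1 - x a) (\<lambda>j. 1 - y (m - 1 - j)) (\<lambda>a. m - 1 - s a)"
proof -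
  have sm: "\<forall>a<n. s a < m" using ne by (simp add: is_NE_def profile_def)
  have prof: "profile m n (\<lambda>a. m - 1 - s a)" using m0 by (simp add: profile_def)
  have key: "util n k pr (\<lambda>a. 1 - x a) (\<lambda>j. 1 - y (m - 1 - j)) ((\<lambda>a. m - 1 - s a)(i := j)) i
      \<le> util n k pr (\<lambda>a. 1 - x a) (\<lambda>j. 1 - y (m - 1 - j)) (\<lambda>a. m - 1 - s a) i" if i: "i < n" and j: "j < m" for i j
  proof -
    define s' where "s' = s(i := m - 1 - j)"
    have s'm: "\<forall>a<n. s' a < m" using sm j by (simp add: s'_def)
    have eq: "(\<lambda>a. m - 1 - s a)(i := j) = (\<lambda>a. m - 1 - s' a)" using j by (auto simp: s'_def)
    have "util n k pr (\<lambda>a. 1 - x a) (\<lambda>j. 1 - y (m - 1 - j)) ((\<lambda>a. m - 1 - s a)(i := j)) i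
        = util n k pr x y s' i" unfolding eq by (rule util_reflect[OF s'm i])
    also have "\<dots> \<le> util n k pr x y s i"
    proof -
      have mj: "m - 1 - j < m" using j by simp
      have all: "\<And>i j. i < n \<Longrightarrow> j < m \<Longrightarrow> util n k pr x y (s(i:=j)) i \<le> util n k pr x y s i"
        using ne by (simp add: is_NE_def)
      show ?thesis unfolding s'_def by (rule all[OF i mj])
    qed
    also have "\<dots> = util n k pr (\<lambda>a. 1 - x a) (\<lambda>j. 1 - y (m - 1 - j)) (\<lambda>a. m - 1 - s a) i"
      by (rule util_reflect[OF sm i, symmetric])
    finally show ?thesis .
  qed
  show ?thesis unfolding is_NE_def using prof key by blast
qed

lemma SW_reflect:
  assumes "\<forall>a<n. s a < m"
  shows "SW n k pr (\<lambda>a. 1 - x a) (\<lambda>j. 1 - y (m - 1 - j)) (\<lambda>a. m - 1 - s a) = SW n k pr x y s"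
  unfolding SW_def by (rule sum.cong[OF refl]) (rule util_reflect[OF assms], simp)

lemma util_reindex:
  assumes bij: "bij_betw \<rho> {0..<n} {0..<n}"
    and ord: "\<forall>a b. a < n \<longrightarrow> b < n \<longrightarrow> (pr a < pr b \<longleftrightarrow> \<rho> a < \<rho> b)"
    and i: "i < n"
  shows "util n k pr (\<lambda>a. X (\<rho> a)) y (\<lambda>a. S (\<rho> a)) i = util n k (\<lambda>t. t) X y S (\<rho> i)"
proof -
  let ?A = "{a \<in> {0..<n}. a \<noteq> i \<and> S (\<rho> a) = S (\<rho> i) \<and> beats pr (\<lambda>a. X (\<rho> a)) (y (S (\<rho> i))) a i}"
  let ?B = "{b \<in> {0..<n}. b \<noteq> \<rho> i \<and> S b = S (\<rho> i) \<and> beats (\<lambda>t. t) X (y (S (\<rho> i))) b (\<rho> i)}"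
  have inj: "inj_on \<rho> {0..<n}" using bij by (simp add: bij_betw_def)
  have img: "\<rho> ` {0..<n} = {0..<n}" using bij by (simp add: bij_betw_def)
  have "\<rho> ` ?A = ?B"
  proof
    show "\<rho> ` ?A \<subseteq> ?B"
    proof
      fix b assume "b \<in> \<rho> ` ?A"
      then obtain a where a: "a \<in> ?A" "b = \<rho> a" by auto
      have "\<rho> a \<noteq> \<rho> i" using a inj i by (auto dest: inj_onD)
      moreover have "\<rho> a < n" using a img by auto
      ultimately show "b \<in> ?B" using a ord i by (auto simp: beats_def)
    qed
    show "?B \<subseteq> \<rho> ` ?A"
    proof
      fix b assume b: "b \<in> ?B"
      then have "b \<in> \<rho> ` {0..<n}" using img by auto
      then obtain a where a: "a < n" "b = \<rho> a" by auto
      have "a \<noteq> i" using b a by auto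
      then have "a \<in> ?A" using a b ord i by (auto simp: beats_def)
      then show "b \<in> \<rho> ` ?A" using a by auto
    qed
  qed
  moreover have "card (\<rho> ` ?A) = card ?A" by (rule card_image) (rule inj_on_subset[OF inj], auto)
  ultimately have "card ?A = card ?B" by simp
  then show ?thesis by (simp add: util_def served_def)
qed

lemma NE_reindex:
  assumes bij: "bij_betw \<rho> {0..<n} {0..<n}"
    and ord: "\<forall>a b. a < n \<longrightarrow> b < n \<longrightarrow> (pr a < pr b \<longleftrightarrow> \<rho> a < \<rho> b)"
    and ne: "is_NE m n k (\<lambda>t. t) X y S"
  shows "is_NE m n k pr (\<lambda>a. X (\<rho> a)) y (\<lambda>a. S (\<rho> a))"
proof -
  have img: "\<rho> ` {0..<n} = {0..<n}" using bij by (simp add: bij_betw_def)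
  have inj: "inj_on \<rho> {0..<n}" using bij by (simp add: bij_betw_def)
  have rlt: "\<rho> a < n" if "a < n" for a using img that by auto
  have prof: "profile m n (\<lambda>a. S (\<rho> a))" using ne rlt by (simp add: is_NE_def profile_def)
  have "util n k pr (\<lambda>a. X (\<rho> a)) y ((\<lambda>a. S (\<rho> a))(i := j)) i \<le> util n k pr (\<lambda>a. X (\<rho> a)) y (\<lambda>a. S (\<rho> a)) i"
    if i: "i < n" and j: "j < m" for i j
  proof -
    have ag: "\<forall>a<n. ((\<lambda>a. S (\<rho> a))(i := j)) a = (\<lambda>a. (S(\<rho> i := j)) (\<rho> a)) a"
      using inj i by (auto dest: inj_onD)
    have "util n k pr (\<lambda>a. X (\<rho> a)) y ((\<lambda>a. S (\<rho> a))(i := j)) i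
        = util n k pr (\<lambda>a. X (\<rho> a)) y (\<lambda>a. (S(\<rho> i := j)) (\<rho> a)) i" by (rule util_cong_profile[OF ag i])
    also have "\<dots> = util n k (\<lambda>t. t) X y (S(\<rho> i := j)) (\<rho> i)" by (rule util_reindex[OF bij ord i])
    also have "\<dots> \<le> util n k (\<lambda>t. t) X y S (\<rho> i)" using ne rlt[OF i] j by (simp add: is_NE_def)
    also have "\<dots> = util n k pr (\<lambda>a. X (\<rho> a)) y (\<lambda>a. S (\<rho> a)) i" by (rule util_reindex[OF bij ord i, symmetric])
    finally show ?thesis .
  qed
  then show ?thesis using prof by (simp add: is_NE_def)
qed

lemma SW_reindex:
  assumes bij: "bij_betw \<rho> {0..<n} {0..<n}"
    and ord: "\<forall>a b. a < n \<longrightarrow> b < n \<longrightarrow> (pr a < pr b \<longleftrightarrow> \<rho> a < \<rho> b)"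
  shows "SW n k pr (\<lambda>a. X (\<rho> a)) y (\<lambda>a. S (\<rho> a)) = SW n k (\<lambda>t. t) X y S"
proof -
  have "SW n k pr (\<lambda>a. X (\<rho> a)) y (\<lambda>a. S (\<rho> a)) = (\<Sum>i\<in>{0..<n}. util n k (\<lambda>t. t) X y S (\<rho> i))"
    unfolding SW_def using util_reindex[OF bij ord] by (simp add: lessThan_atLeast0)
  also have "\<dots> = (\<Sum>t\<in>{0..<n}. util n k (\<lambda>t. t) X y S t)"
    by (rule sum.reindex_bij_betw[OF bij])
  finally show ?thesis by (simp add: SW_def lessThan_atLeast0)
qed

definition priority_rank :: "(nat \<Rightarrow> nat) \<Rightarrow> nat \<Rightarrow> nat \<Rightarrow> nat" where
  "priority_rank pr n i = card {a \<in> {0..<n}. pr a < pr i}"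

lemma strict_total_on_priority:
  fixes pr :: "nat \<Rightarrow> nat"
  assumes "inj_on pr {0..<n}"
  shows "strict_total_on {0..<n} (\<lambda>a b. pr a < pr b)"
proof -
  have "pr a \<noteq> pr b" if "a \<in> {0..<n}" "b \<in> {0..<n}" "a \<noteq> b" for a b
    using assms that by (auto dest: inj_onD)
  then show ?thesis unfolding strict_total_on_def by (auto simp: linorder_neq_iff)
qed

lemma bij_priority_rank:
  assumes "inj_on pr {0..<n}"
  shows "bij_betw (priority_rank pr n) {0..<n} {0..<n}"
  using rank_inj_on[OF strict_total_on_priority[OF assms]] rank_image[OF strict_total_on_priority[OF assms]]
  unfolding bij_betw_def priority_rank_def[abs_def] by (simp add: lessThan_atLeast0)

lemma priority_rank_less_iff:
  assumes "inj_on pr {0..<n}" "a < n" "b < n"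
  shows "priority_rank pr n a < priority_rank pr n b \<longleftrightarrow> pr a < pr b"
proof
  show "pr a < pr b \<Longrightarrow> priority_rank pr n a < priority_rank pr n b"
    using rank_less_rank[OF strict_total_on_priority[OF assms(1)]] assms(2,3)
    by (simp add: priority_rank_def)
  assume "priority_rank pr n a < priority_rank pr n b"
  moreover have "pr b < pr a \<Longrightarrow> priority_rank pr n b < priority_rank pr n a"
    using rank_less_rank[OF strict_total_on_priority[OF assms(1)]] assms(2,3)
    by (simp add: priority_rank_def)
  moreover have "pr a \<noteq> pr b \<or> a = b" using assms by (auto dest: inj_onD)
  ultimately show "pr a < pr b" by (auto simp: linorder_neq_iff)
qed

lemma PM_reindex_mono:
  fixes \<Psi> :: "nat \<Rightarrow> real"
  assumes "mono \<Psi>" "bij_betw \<pi> {0..<n} {0..<n}" "\<forall>a<n. x a = \<Psi> (\<pi> a)" "q j < n"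
    and "q j = nat \<lfloor>v j * real (n - 1)\<rfloor>"
  shows "PM n v x j = \<Psi> (q j)"
proof -
  have "map x [0..<n] = map (\<lambda>a. \<Psi> (\<pi> a)) [0..<n]" using assms(3) by simp
  then have "sort (map x [0..<n]) = sort (map (\<lambda>a. \<Psi> (\<pi> a)) [0..<n])" by (simp only:)
  also have "\<dots> = map \<Psi> [0..<n]"
    by (simp only: sort_map_reindex[OF assms(2), of \<Psi>] sort_map_mono[OF assms(1)])
  finally have "sort (map x [0..<n]) = map \<Psi> [0..<n]" .
  moreover have "PM n v x j = sort (map x [0..<n]) ! q j" by (simp only: PM_def assms(5))
  ultimately show ?thesis using assms(4) by simp
qed

text \<open>Reindexing agents by their priority rank turns a pair of equilibria for the identity priority
  into one for \<open>pr\<close>, with positions that are a permutation of the original ones.\<close>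

lemma not_equilibrium_stable_if_welfare_differs:
  assumes inj: "inj_on pr {0..<n}" and X: "\<forall>t<n. X t \<in> {0..1}"
    and facilities: "\<forall>j<m. PM n v X j = y j"
    and NE: "is_NE m n k (\<lambda>t. t) X y s" "is_NE m n k (\<lambda>t. t) X y s'"
    and differ: "SW n k (\<lambda>t. t) X y s \<noteq> SW n k (\<lambda>t. t) X y s'"
  shows "\<not> equilibrium_stable m n k pr (PM n v)"
proof
  assume ES: "equilibrium_stable m n k pr (PM n v)"
  define \<rho> where "\<rho> = priority_rank pr n"
  have bij: "bij_betw \<rho> {0..<n} {0..<n}" unfolding \<rho>_def by (rule bij_priority_rank[OF inj])
  have ord: "\<forall>a b. a < n \<longrightarrow> b < n \<longrightarrow> (pr a < pr b \<longleftrightarrow> \<rho> a < \<rho> b)"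
    using priority_rank_less_iff[OF inj] by (simp add: \<rho>_def)
  define x where "x = (\<lambda>a. X (\<rho> a))"
  have "valid_pos n x" using X bij_betw_apply[OF bij] by (simp add: valid_pos_def x_def)
  have y: "\<forall>j<m. y j = PM n v x j"
    using facilities sort_map_reindex[OF bij, of X] by (simp add: PM_def x_def)
  have NE': "is_NE m n k pr x (PM n v x) (\<lambda>a. S (\<rho> a))"
    and SW': "SW n k pr x (PM n v x) (\<lambda>a. S (\<rho> a)) = SW n k (\<lambda>t. t) X y S"
    if "is_NE m n k (\<lambda>t. t) X y S" for S
  proof -
    have "is_NE m n k pr x y (\<lambda>a. S (\<rho> a))" unfolding x_def by (rule NE_reindex[OF bij ord that])
    then show NE': "is_NE m n k pr x (PM n v x) (\<lambda>a. S (\<rho> a))" by (rule NE_cong_facilities[OF y])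
    have "SW n k pr x (PM n v x) (\<lambda>a. S (\<rho> a)) = SW n k pr x y (\<lambda>a. S (\<rho> a))"
      using SW_cong_facilities[OF y] NE' by (simp add: is_NE_def)
    also have "\<dots> = SW n k (\<lambda>t. t) X y S" unfolding x_def by (rule SW_reindex[OF bij ord])
    finally show "SW n k pr x (PM n v x) (\<lambda>a. S (\<rho> a)) = SW n k (\<lambda>t. t) X y S" .
  qed
  have "SW n k pr x (PM n v x) (\<lambda>a. s (\<rho> a)) = SW n k pr x (PM n v x) (\<lambda>a. s' (\<rho> a))"
    using ES \<open>valid_pos n x\<close> NE'[OF NE(1)] NE'[OF NE(2)] unfolding equilibrium_stable_def by blast
  then show False using differ SW'[OF NE(1)] SW'[OF NE(2)] by simp
qed

lemma not_equilibrium_stable_if_unstable_instance: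
  assumes "unstable_instance n m k p j0" "inj_on pr {0..<n}"
    and "\<forall>j<m. p j = nat \<lfloor>v j * real (n - 1)\<rfloor>"
  shows "\<not> equilibrium_stable m n k pr (PM n v)"
proof -
  interpret unstable_instance n m k p j0 by (rule assms(1))
  show ?thesis
  proof (rule not_equilibrium_stable_if_welfare_differs[OF assms(2)])
    show "\<forall>j<m. PM n v pos j = loc j"
    proof (intro allI impI)
      fix j assume "j < m"
      show "PM n v pos j = loc j" unfolding loc_def
        by (rule PM_reindex_mono[where \<pi> = id and q = p])
          (use \<open>j < m\<close> assms(3) p_less pos_mono in \<open>auto simp: mono_def\<close>)
    qed
  qed (use pos_unit NE_strategy SW_strategy_differ in auto)
qed

lemma not_equilibrium_stable_if_reflected_unstable_instance:
  assumes "unstable_instance n m k (\<lambda>j. n - 1 - p (m - 1 - j)) j1" "inj_on pr {0..<n}"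
    and p: "\<forall>j<m. p j = nat \<lfloor>v j * real (n - 1)\<rfloor> \<and> p j < n"
  shows "\<not> equilibrium_stable m n k pr (PM n v)"
proof -
  interpret I: unstable_instance n m k "\<lambda>j. n - 1 - p (m - 1 - j)" j1 by (rule assms(1))
  have "0 < m" using I.j0_less by simp
  define y where "y = (\<lambda>j. 1 - I.loc (m - 1 - j))"
  show ?thesis
  proof (rule not_equilibrium_stable_if_welfare_differs[where X = "\<lambda>t. 1 - I.pos t" and y = y
        and s = "\<lambda>t. m - 1 - I.strategy True t" and s' = "\<lambda>t. m - 1 - I.strategy False t", OF assms(2)])
    have PM_eq: "PM n v (\<lambda>t. 1 - I.pos t) j = 1 - I.pos (n - 1 - p j)" if "j < m" for j
    proof (rule PM_reindex_mono[where \<Psi> = "\<lambda>u. 1 - I.pos (n - 1 - u)" and \<pi> = "\<lambda>a. n - 1 - a" and q = p])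
      show "mono (\<lambda>u. 1 - I.pos (n - 1 - u))"
      proof (rule monoI)
        fix u u' :: nat assume "u \<le> u'"
        then have "I.pos (n - 1 - u') \<le> I.pos (n - 1 - u)" by (intro I.pos_mono) simp
        then show "1 - I.pos (n - 1 - u) \<le> 1 - I.pos (n - 1 - u')" by simp
      qed
      show "bij_betw (\<lambda>a. n - 1 - a) {0..<n} {0..<n}"
        by (rule bij_betw_byWitness[where f' = "\<lambda>a. n - 1 - a"]) auto
    qed (use p that in auto)
    show "\<forall>j<m. PM n v (\<lambda>t. 1 - I.pos t) j = y j"
    proof (intro allI impI)
      fix j assume "j < m"
      then have "m - Suc (m - Suc j) = j" by simp
      then have "I.loc (m - 1 - j) = I.pos (n - 1 - p j)" unfolding I.loc_def by simp
      then show "PM n v (\<lambda>t. 1 - I.pos t) j = y j" using PM_eq[OF \<open>j < m\<close>] by (simp add: y_def)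
    qed
    show "is_NE m n k (\<lambda>t. t) (\<lambda>t. 1 - I.pos t) y (\<lambda>t. m - 1 - I.strategy True t)"
      and "is_NE m n k (\<lambda>t. t) (\<lambda>t. 1 - I.pos t) y (\<lambda>t. m - 1 - I.strategy False t)"
      using NE_reflect[OF I.NE_strategy \<open>0 < m\<close>] by (simp_all add: y_def)
    show "SW n k (\<lambda>t. t) (\<lambda>t. 1 - I.pos t) y (\<lambda>t. m - 1 - I.strategy True t)
        \<noteq> SW n k (\<lambda>t. t) (\<lambda>t. 1 - I.pos t) y (\<lambda>t. m - 1 - I.strategy False t)"
      using SW_reflect I.SW_strategy_differ I.strategy_less by (simp add: y_def)
  qed (use I.pos_unit in auto)
qed

text \<open>The instance needs \<open>tail\<close> spare agents beyond the blocks on one side; as \<open>Q - P + 2 tail \<le> 2k\<close>,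
  the \<open>n - mk \<ge> 1\<close> agents outside the \<open>m\<close> blocks always suffice on the right or on the left.\<close>

lemma room_on_one_side:
  fixes P Q :: nat
  assumes "m * k < n" "j0 + 1 < m" "P + 2 \<le> Q" "Q + 2 \<le> P + 2 * k"
  shows "Q + (m - j0 - 2) * k + (k + 1 - min k (Q - P)) < n \<or> j0 * k + (k + 1 - min k (Q - P)) \<le> P"
proof -
  define tail where "tail = k + 1 - min k (Q - P)"
  have tail: "Q - P + 2 * tail \<le> 2 * k" unfolding tail_def using assms(3,4) by (auto simp: min_def)
  define r where "r = m - j0 - 2"
  then have "m = j0 + 2 + r" using assms(2) by simp
  then have mk: "m * k = j0 * k + 2 * k + r * k" and "(m - j0 - 2) * k = r * k"
    by (simp_all add: algebra_simps)
  show ?thesis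
  proof (rule ccontr)
    assume "\<not> ?thesis"
    then have "n \<le> Q + r * k + tail" "P < j0 * k + tail"
      unfolding tail_def[symmetric] \<open>(m - j0 - 2) * k = r * k\<close> by auto
    then show False using mk assms(1,3) tail by linarith
  qed
qed

lemma not_equilibrium_stable_if_narrow_gap:
  assumes "m * k < n" "inj_on pr {0..<n}"
    and p: "\<forall>j<m. p j = nat \<lfloor>v j * real (n - 1)\<rfloor> \<and> p j < n"
    and step: "\<And>j. j + 1 < m \<Longrightarrow> p j + 2 \<le> p (j + 1)"
    and j0: "j0 + 1 < m" and narrow: "p (j0 + 1) + 2 \<le> p j0 + 2 * k"
  shows "\<not> equilibrium_stable m n k pr (PM n v)"
  using room_on_one_side[OF assms(1) j0 step[OF j0] narrow]
proof
  have p_less: "\<And>j. j < m \<Longrightarrow> p j < n" using p by blast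
  assume "p (j0 + 1) + (m - j0 - 2) * k + (k + 1 - min k (p (j0 + 1) - p j0)) < n"
  then have "unstable_instance n m k p j0"
  proof unfold_locales
    show "p j < p (j + 1)" if "j + 1 < m" for j using step[OF that] by simp
  qed (use p_less j0 narrow step[OF j0] in auto)
  then show ?thesis using not_equilibrium_stable_if_unstable_instance assms(2) p by blast
next
  have p_less: "\<And>j. j < m \<Longrightarrow> p j < n" using p by blast
  assume room: "j0 * k + (k + 1 - min k (p (j0 + 1) - p j0)) \<le> p j0"
  define j1 where "j1 = m - 2 - j0"
  have j1: "m - 1 - j1 = j0 + 1" "m - 1 - (j1 + 1) = j0" "m - j1 - 2 = j0" "j1 + 1 < m"
    using j0 by (auto simp: j1_def)
  have "unstable_instance n m k (\<lambda>j. n - 1 - p (m - 1 - j)) j1"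
  proof unfold_locales
    fix j assume "j + 1 < m"
    then have "p (m - 1 - (j + 1)) + 2 \<le> p (m - 1 - j)" and "p (m - 1 - j) < n"
      using step[of "m - 1 - (j + 1)"] p_less[of "m - 1 - j"] by (simp_all add: Suc_diff_Suc)
    then show "n - 1 - p (m - 1 - j) < n - 1 - p (m - 1 - (j + 1))" by linarith
  next
    have "p j0 < n" "p (j0 + 1) < n" using p_less j0 by simp_all
    then show "n - 1 - p (m - 1 - j1) + 2 \<le> n - 1 - p (m - 1 - (j1 + 1))"
      "n - 1 - p (m - 1 - (j1 + 1)) + 2 \<le> n - 1 - p (m - 1 - j1) + 2 * k"
      "n - 1 - p (m - 1 - (j1 + 1)) + (m - j1 - 2) * k + (k + 1 - min k
         (n - 1 - p (m - 1 - (j1 + 1)) - (n - 1 - p (m - 1 - j1)))) < n"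
      unfolding j1(1-3) using step[OF j0] narrow room by linarith+
  qed (use j1(4) p_less[of j0] j0 in auto)
  then show ?thesis using not_equilibrium_stable_if_reflected_unstable_instance assms(2) p by blast
qed

theorem theorem8:
  fixes m n k :: nat and v :: "nat \<Rightarrow> real" and pr :: "nat \<Rightarrow> nat"
  assumes "m \<ge> 2" and "m * k < n"
    and "inj_on pr {0..<n}"
    and "\<forall>j<m. v j \<in> {0..1}"
    and "\<forall>j. j + 1 < m \<longrightarrow> v j < v (j + 1)"
    and "\<forall>j. j + 1 < m \<longrightarrow>
           \<lfloor>v (j + 1) * real (n - 1)\<rfloor> - \<lfloor>v j * real (n - 1)\<rfloor> > 1"
  shows "equilibrium_stable m n k pr (PM n v) \<longleftrightarrow>
    (\<forall>j. j + 1 < m \<longrightarrow>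
       \<lfloor>v (j + 1) * real (n - 1)\<rfloor> - \<lfloor>v j * real (n - 1)\<rfloor> \<ge> 2 * int k - 1)"
proof -
  define p where "p j = nat \<lfloor>v j * real (n - 1)\<rfloor>" for j
  have "0 < n" using assms(2) by simp
  have nonneg: "0 \<le> \<lfloor>v j * real (n - 1)\<rfloor>" if "j < m" for j using assms(4) that by auto
  have p: "\<forall>j<m. p j = nat \<lfloor>v j * real (n - 1)\<rfloor> \<and> p j < n"
    using percentile_index_less[OF _ \<open>0 < n\<close>] assms(4) by (auto simp: p_def)
  have step: "p j + 2 \<le> p (j + 1)" if "j + 1 < m" for j
  proof -
    have "1 < \<lfloor>v (j + 1) * real (n - 1)\<rfloor> - \<lfloor>v j * real (n - 1)\<rfloor>" using assms(6) that by blast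
    then show ?thesis using nonneg[of j] that unfolding p_def by linarith
  qed
  show ?thesis
  proof (intro iffI allI impI)
    fix j assume "equilibrium_stable m n k pr (PM n v)" "j + 1 < m"
    then have "\<not> p (j + 1) + 2 \<le> p j + 2 * k"
      using not_equilibrium_stable_if_narrow_gap[OF assms(2,3) p step] by blast
    then show "\<lfloor>v (j + 1) * real (n - 1)\<rfloor> - \<lfloor>v j * real (n - 1)\<rfloor> \<ge> 2 * int k - 1"
      using nonneg[of j] nonneg[of "j + 1"] \<open>j + 1 < m\<close> unfolding p_def by linarith
  qed (use PM_equilibrium_stable_if_wide_gaps[OF assms(3) \<open>0 < n\<close> _ assms(4)] assms(1) in auto)
qed

end
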